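(* Let $K\in\mathbb{N}$, $L>0$, and let $\mathbf{x}$ be a random vector in $\mathbb{R}^K$ with probability density function $p\colon\mathbb{R}^K\to\mathbb{R}_+$ such that $\Pr(\mathbf{x}\in[0,1]^K)=1$ and $p$ is $L$-Lipschitz on $\mathbb{R}^K$ with respect to the $\ell_1$-norm, i.e. $|p(\mathbf{x})-p(\mathbf{y})|\le L\|\mathbf{x}-\mathbf{y}\|_1$ for all $\mathbf{x},\mathbf{y}\in\mathbb{R}^K$. Let $\mathcal{D}=(\mathbf{x}_1,\dots,\mathbf{x}_N)$ be $N$ i.i.d. copies of $\mathbf{x}$, let $M\in\mathbb{N}$, and define the estimator \[ \hat h(\mathcal{D}) := H(\tilde{\mathbf{y}}) - K\log M, \] where $\tilde{\mathbf{y}}=\Delta_M(\mathbf{y})$, $\mathbf{y}$ is distributed according to the empirical distribution of $\mathcal{D}$ (i.e. $\mathbf{y}=\mathbf{x}_u$ with $u$ uniform on $\{1,\dots,N\}$), $\Delta_M$ acts element-wise by $\Delta_M(x)=\lfloor Mx\rfloor/M$, and $H$ denotes Shannon entropy (computed for the given sample, so $\hat h(\mathcal D)$ is the Shannon entropy of the empirical distribution of the quantized samples minus $K\log M$). Define \[ \eta(K,L):=\frac1K\Big(\frac{2(K+1)!}{L}\Big)^{\frac1{K+1}},\qquad \alpha:=\frac{\sqrt{e^2+4}-e}{2e}. \] If $M\ge\frac{1}{\alpha\,\eta(K,L)}$, then for any $\delta\in(0,1)$, with probability greater than $1-\delta$, \[ \big|\hat h(\mathcal{D})-h(\mathbf{x})\big|\le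 \frac{LK}{2M}\log\big(M\eta(K,L)\big)+\sqrt{\frac2N\log\frac2\delta}\,\log N+\log\Big(1+\frac{M^K-1}{N}\Big). \]
   Context: $h(\mathbf{x})=-\int p\log p\,\mathrm{d}\lambda^K$ is the differential entropy of $\mathbf{x}$. Equivalently, $\hat h(\mathcal D)-\!(-K\log M)$ is $-\sum_j \frac{n_j}{N}\log\frac{n_j}{N}$, where $n_j$ is the number of samples whose element-wise quantization $\Delta_M(\mathbf{x}_i)$ equals the $j$-th grid point. *)

theory Defs
  imports "HOL-Probability.Probability"
begin

definition quantize :: "nat \<Rightarrow> real ^ 'n \<Rightarrow> real ^ 'n" where
  "quantize M v = (\<chi> i. real_of_int \<lfloor>real M * v $ i\<rfloor> / real M)"

definition shannon_entropy :: "'a pmf \<Rightarrow> real" where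
  "shannon_entropy q = - (\<Sum>y\<in>set_pmf q. pmf q y * ln (pmf q y))"

definition quantized_empirical :: "nat \<Rightarrow> nat \<Rightarrow> (nat \<Rightarrow> real ^ 'n) \<Rightarrow> (real ^ 'n) pmf" where
  "quantized_empirical M N xs = map_pmf (\<lambda>u. quantize M (xs u)) (pmf_of_set {..<N})"

definition entropy_estimator :: "nat \<Rightarrow> nat \<Rightarrow> (nat \<Rightarrow> real ^ 'n) \<Rightarrow> real" where
  "entropy_estimator M N xs =
     shannon_entropy (quantized_empirical M N xs) - real CARD('n) * ln (real M)"

definition diff_entropy :: "(real ^ 'n \<Rightarrow> real) \<Rightarrow> real" where
  "diff_entropy p = - (\<integral>x. p x * ln (p x) \<partial>lborel)"

definition unit_cube :: "(real ^ 'n) set" where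
  "unit_cube = {v. \<forall>i. 0 \<le> v $ i \<and> v $ i \<le> 1}"

definition eta :: "nat \<Rightarrow> real \<Rightarrow> real" where
  "eta K L = (1 / real K) * (2 * fact (K + 1) / L) powr (1 / real (K + 1))"

definition alpha_const :: real where
  "alpha_const = (sqrt ((exp 1)\<^sup>2 + 4) - exp 1) / (2 * exp 1)"

end

(*
  The estimator is the plug-in entropy of the quantized sample, shifted by K log M; its error
  splits into three parts.

  Discretization: on a cell of side 1/M the L-Lipschitz density varies by at most LK/M, so
  comparing p with its mean on each cell shows that the entropy of the quantized variable,
  minus K log M, exceeds h(x) by at most LK/M.  The hypothesis on M only serves to make
  log (M eta) > 2, so that LK/M is strictly smaller than the first term of the bound.

  Bias: by Gibbs' inequality the plug-in entropy is at most the cross entropy of the empirical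
  cell frequencies f against the true cell probabilities q, whose expectation is the entropy H
  of the quantized variable.  Conversely, log x <= x - 1 bounds the relative entropy of f with
  respect to q by X / c - 1 + log c for every c > 0, where X = sum f^2 / q.  Since
  E X = 1 + (S - 1) / N for the S <= M^K cells of positive probability, choosing c = E X loses
  at most log (1 + (M^K - 1) / N) in expectation.

  Concentration: changing one sample changes the plug-in entropy by at most 2 log N / N, so
  McDiarmid's inequality bounds its deviation from the mean by the square-root term, with
  probability greater than 1 - delta.
*)

theory Submission
  imports Defs
begin

section \<open>McDiarmid's inequality\<close>

context
  fixes Q :: "'b measure" and f :: "(nat \<Rightarrow> 'b) \<Rightarrow> real" and n :: nat and B c :: real
  assumes Q: "prob_space Q"
    and f_meas: "f \<in> borel_measurable (PiM {..<Suc n} (\<lambda>_. Q))"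
    and f_bound: "\<forall>xs\<in>space (PiM {..<Suc n} (\<lambda>_. Q)). \<bar>f xs\<bar> \<le> B"
    and f_diff: "\<forall>xs\<in>space (PiM {..<Suc n} (\<lambda>_. Q)). \<forall>i<Suc n. \<forall>y\<in>space Q. \<bar>f xs - f (xs(i:=y))\<bar> \<le> c"
begin

interpretation Q: prob_space Q by (rule Q)

lemma last_coordinate_section:
  assumes xs: "xs \<in> space (PiM {..<n} (\<lambda>_. Q))"
  shows "(\<lambda>y. f (xs(n:=y))) \<in> borel_measurable Q"
    and "y \<in> space Q \<Longrightarrow> \<bar>f (xs(n:=y))\<bar> \<le> B"
    and "y \<in> space Q \<Longrightarrow> z \<in> space Q \<Longrightarrow> i \<le> n \<Longrightarrow> \<bar>f (xs(n:=y)) - f ((xs(n:=y))(i:=z))\<bar> \<le> c"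
    and "integrable Q (\<lambda>y. f (xs(n:=y)))"
proof -
  have upd: "xs(n:=y) \<in> space (PiM {..<Suc n} (\<lambda>_. Q))" if "y \<in> space Q" for y
    using xs that by (auto simp: space_PiM PiE_iff extensional_def)
  have "f \<in> borel_measurable (PiM (insert n {..<n}) (\<lambda>_. Q))"
    using f_meas by (simp add: lessThan_Suc)
  from measurable_comp[OF measurable_component_update this, OF xs]
  show meas: "(\<lambda>y. f (xs(n:=y))) \<in> borel_measurable Q" by (simp add: comp_def fun_upd_def)
  show bound: "\<bar>f (xs(n:=y))\<bar> \<le> B" if "y \<in> space Q" for y
    using f_bound upd[OF that] by blast
  show "\<bar>f (xs(n:=y)) - f ((xs(n:=y))(i:=z))\<bar> \<le> c" if "y \<in> space Q" "z \<in> space Q" "i \<le> n"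
    using f_diff upd[OF that(1)] that(2,3) less_Suc_eq_le by blast
  show "integrable Q (\<lambda>y. f (xs(n:=y)))"
    using meas bound by (intro Q.integrable_const_bound[where B=B]) auto
qed

lemma integral_last_coordinate_bounded_differences:
  "(\<lambda>xs. \<integral>y. f (xs(n:=y)) \<partial>Q) \<in> borel_measurable (PiM {..<n} (\<lambda>_. Q))"
  "\<forall>xs\<in>space (PiM {..<n} (\<lambda>_. Q)). \<bar>\<integral>y. f (xs(n:=y)) \<partial>Q\<bar> \<le> B"
  "\<forall>xs\<in>space (PiM {..<n} (\<lambda>_. Q)). \<forall>i<n. \<forall>y\<in>space Q.
      \<bar>(\<integral>z. f (xs(n:=z)) \<partial>Q) - (\<integral>z. f ((xs(i:=y))(n:=z)) \<partial>Q)\<bar> \<le> c"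
proof -
  have "(\<lambda>z. f ((fst z)(n := snd z))) \<in> borel_measurable (PiM {..<n} (\<lambda>_. Q) \<Otimes>\<^sub>M Q)"
    using measurable_comp[OF measurable_add_dim[of n "{..<n}" "\<lambda>_. Q"]] f_meas
    by (simp add: comp_def case_prod_beta lessThan_Suc)
  then show "(\<lambda>xs. \<integral>y. f (xs(n:=y)) \<partial>Q) \<in> borel_measurable (PiM {..<n} (\<lambda>_. Q))"
    by measurable
  show "\<forall>xs\<in>space (PiM {..<n} (\<lambda>_. Q)). \<bar>\<integral>y. f (xs(n:=y)) \<partial>Q\<bar> \<le> B"
  proof
    fix xs assume xs: "xs \<in> space (PiM {..<n} (\<lambda>_. Q))"
    have "\<bar>\<integral>y. f (xs(n:=y)) \<partial>Q\<bar> \<le> (\<integral>y. \<bar>f (xs(n:=y))\<bar> \<partial>Q)" by (rule integral_abs_bound)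
    also have "\<dots> \<le> (\<integral>y. B \<partial>Q)"
      using last_coordinate_section[OF xs] by (intro integral_mono) auto
    finally show "\<bar>\<integral>y. f (xs(n:=y)) \<partial>Q\<bar> \<le> B" by (simp add: Q.prob_space)
  qed
  show "\<forall>xs\<in>space (PiM {..<n} (\<lambda>_. Q)). \<forall>i<n. \<forall>y\<in>space Q.
      \<bar>(\<integral>z. f (xs(n:=z)) \<partial>Q) - (\<integral>z. f ((xs(i:=y))(n:=z)) \<partial>Q)\<bar> \<le> c"
  proof (intro ballI allI impI)
    fix xs i y assume xs: "xs \<in> space (PiM {..<n} (\<lambda>_. Q))" and i: "i < n" and y: "y \<in> space Q"
    have xs': "xs(i:=y) \<in> space (PiM {..<n} (\<lambda>_. Q))" using xs y i by (auto simp: space_PiM PiE_iff extensional_def)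
    have swap: "(xs(i:=y))(n:=z) = (xs(n:=z))(i:=y)" for z using i by (auto simp: fun_eq_iff)
    have "\<bar>(\<integral>z. f (xs(n:=z)) \<partial>Q) - (\<integral>z. f ((xs(i:=y))(n:=z)) \<partial>Q)\<bar>
        = \<bar>\<integral>z. f (xs(n:=z)) - f ((xs(i:=y))(n:=z)) \<partial>Q\<bar>"
      using last_coordinate_section(4)[OF xs] last_coordinate_section(4)[OF xs'] by simp
    also have "\<dots> \<le> (\<integral>z. \<bar>f (xs(n:=z)) - f ((xs(i:=y))(n:=z))\<bar> \<partial>Q)" by (rule integral_abs_bound)
    also have "\<dots> \<le> (\<integral>z. c \<partial>Q)"
      using last_coordinate_section(4)[OF xs] last_coordinate_section(4)[OF xs']
        last_coordinate_section(3)[OF xs _ y, of _ i] i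
      by (intro integral_mono) (auto simp: swap)
    finally show "\<bar>(\<integral>z. f (xs(n:=z)) \<partial>Q) - (\<integral>z. f ((xs(i:=y))(n:=z)) \<partial>Q)\<bar> \<le> c"
      by (simp add: Q.prob_space)
  qed
qed

text \<open>Given the first \<open>n\<close> coordinates, the last one moves \<open>f\<close> inside an interval of length \<open>c\<close>,
  so Hoeffding's lemma applies to it.\<close>

lemma nn_integral_exp_last_coordinate_le:
  assumes l: "l > 0" and xs: "xs \<in> space (PiM {..<n} (\<lambda>_. Q))"
  shows "(\<integral>\<^sup>+y. ennreal (exp (l * (f (xs(n:=y)) - E))) \<partial>Q)
    \<le> ennreal (exp (l * ((\<integral>y. f (xs(n:=y)) \<partial>Q) - E))) * ennreal (exp (l\<^sup>2 * c\<^sup>2 / 8))"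
proof -
  note slice = last_coordinate_section[OF xs]
  define a where "a = (INF y\<in>space Q. f (xs(n:=y)))"
  have "bdd_below ((\<lambda>y. f (xs(n:=y))) ` space Q)"
    using slice(2) by (intro bdd_belowI[where m="-B"]) force
  then have low: "a \<le> f (xs(n:=y))" if "y \<in> space Q" for y
    unfolding a_def using that by (rule cINF_lower)
  have "f (xs(n:=y)) - c \<le> a" if "y \<in> space Q" for y
    unfolding a_def using slice(3)[OF that _ order.refl]
    by (intro cINF_greatest[OF Q.not_empty]) (force simp: abs_le_iff)
  then have up: "f (xs(n:=y)) \<le> a + c" if "y \<in> space Q" for y
    using that by force
  interpret interval_bounded_random_variable Q "\<lambda>y. f (xs(n:=y))" a "a + c"
    using slice(1) low up by unfold_locales auto
  let ?g = "\<integral>y. f (xs(n:=y)) \<partial>Q"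
  have "(\<integral>\<^sup>+y. ennreal (exp (l * (f (xs(n:=y)) - E))) \<partial>Q)
      = (\<integral>\<^sup>+y. ennreal (exp (l * (?g - E))) * ennreal (exp (l * (f (xs(n:=y)) - ?g))) \<partial>Q)"
    by (intro nn_integral_cong) (simp add: ennreal_mult'[symmetric] exp_add[symmetric] algebra_simps)
  also have "\<dots> = ennreal (exp (l * (?g - E))) * (\<integral>\<^sup>+y. ennreal (exp (l * (f (xs(n:=y)) - ?g))) \<partial>Q)"
    by (rule nn_integral_cmult) (use slice(1) in measurable)
  also have "\<dots> \<le> ennreal (exp (l * (?g - E))) * ennreal (exp (l\<^sup>2 * c\<^sup>2 / 8))"
    using Hoeffdings_lemma_nn_integral[OF l] by (intro mult_left_mono) auto
  finally show ?thesis .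
qed

end

lemma mcdiarmid_exp_bound:
  fixes Q :: "'b measure" and f :: "(nat \<Rightarrow> 'b) \<Rightarrow> real"
  assumes Q: "prob_space Q" and l: "l > 0"
    and "f \<in> borel_measurable (PiM {..<n} (\<lambda>_. Q))"
    and "\<forall>xs\<in>space (PiM {..<n} (\<lambda>_. Q)). \<bar>f xs\<bar> \<le> B"
    and "\<forall>xs\<in>space (PiM {..<n} (\<lambda>_. Q)). \<forall>i<n. \<forall>y\<in>space Q. \<bar>f xs - f (xs(i:=y))\<bar> \<le> c"
  shows "(\<integral>\<^sup>+xs. ennreal (exp (l * (f xs - (\<integral>xs. f xs \<partial>PiM {..<n} (\<lambda>_. Q))))) \<partial>PiM {..<n} (\<lambda>_. Q))
      \<le> ennreal (exp (l\<^sup>2 * real n * c\<^sup>2 / 8))"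
  using assms(3-5)
proof (induction n arbitrary: f)
  case 0
  have "(\<integral>\<^sup>+xs. ennreal (exp (l * (f xs - (\<integral>xs. f xs \<partial>PiM {..<0::nat} (\<lambda>_. Q))))) \<partial>PiM {..<0::nat} (\<lambda>_. Q)) = 1"
    by (simp add: PiM_empty nn_integral_count_space_finite lebesgue_integral_count_space_finite)
  then show ?case by simp
next
  case (Suc n)
  interpret Q: prob_space Q by (rule Q)
  interpret PP: product_prob_space "\<lambda>_::nat. Q" by unfold_locales
  let ?P = "PiM {..<n} (\<lambda>_. Q)" and ?P' = "PiM (insert n {..<n}) (\<lambda>_. Q)"
  define g where "g = (\<lambda>xs. \<integral>y. f (xs(n:=y)) \<partial>Q)"
  have g: "g \<in> borel_measurable ?P" "\<forall>xs\<in>space ?P. \<bar>g xs\<bar> \<le> B"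
    "\<forall>xs\<in>space ?P. \<forall>i<n. \<forall>y\<in>space Q. \<bar>g xs - g (xs(i:=y))\<bar> \<le> c"
    unfolding g_def by (rule integral_last_coordinate_bounded_differences[OF Q Suc.prems])+
  define E where "E = (\<integral>xs. g xs \<partial>?P)"
  note g(1)[measurable]
  have f_meas[measurable]: "f \<in> borel_measurable ?P'" using Suc.prems(1) by (simp add: lessThan_Suc)
  interpret P': prob_space ?P' by (rule prob_space_PiM) (rule Q)
  have "integrable ?P' f"
    using Suc.prems(2) by (intro P'.integrable_const_bound[where B=B]) (auto simp: lessThan_Suc)
  then have E_eq: "(\<integral>xs. f xs \<partial>?P') = E"
    unfolding g_def E_def by (intro PP.product_integral_insert) auto
  have "(\<integral>\<^sup>+xs. ennreal (exp (l * (f xs - (\<integral>xs. f xs \<partial>PiM {..<Suc n} (\<lambda>_. Q))))) \<partial>PiM {..<Suc n} (\<lambda>_. Q))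
      = (\<integral>\<^sup>+xs. ennreal (exp (l * (f xs - E))) \<partial>?P')"
    using E_eq by (simp add: lessThan_Suc)
  also have "\<dots> = (\<integral>\<^sup>+xs. (\<integral>\<^sup>+y. ennreal (exp (l * (f (xs(n:=y)) - E))) \<partial>Q) \<partial>?P)"
    by (rule PP.product_nn_integral_insert) auto
  also have "\<dots> \<le> (\<integral>\<^sup>+xs. ennreal (exp (l * (g xs - E))) * ennreal (exp (l\<^sup>2 * c\<^sup>2 / 8)) \<partial>?P)"
    unfolding g_def by (intro nn_integral_mono nn_integral_exp_last_coordinate_le[OF Q Suc.prems l])
  also have "\<dots> = (\<integral>\<^sup>+xs. ennreal (exp (l * (g xs - E))) \<partial>?P) * ennreal (exp (l\<^sup>2 * c\<^sup>2 / 8))"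
    by (intro nn_integral_multc) measurable
  also have "\<dots> \<le> ennreal (exp (l\<^sup>2 * real n * c\<^sup>2 / 8)) * ennreal (exp (l\<^sup>2 * c\<^sup>2 / 8))"
    using Suc.IH[OF g] unfolding E_def by (intro mult_right_mono) auto
  also have "\<dots> = ennreal (exp (l\<^sup>2 * real (Suc n) * c\<^sup>2 / 8))"
    by (simp add: ennreal_mult'[symmetric] exp_add[symmetric] algebra_simps)
  finally show ?case .
qed

lemma mcdiarmid_upper_tail:
  fixes Q :: "'b measure" and f :: "(nat \<Rightarrow> 'b) \<Rightarrow> real"
  assumes Q: "prob_space Q" and c: "c > 0" and n: "n > 0" and t: "t > 0"
    and f_meas: "f \<in> borel_measurable (PiM {..<n} (\<lambda>_. Q))"
    and f_bound: "\<forall>xs\<in>space (PiM {..<n} (\<lambda>_. Q)). \<bar>f xs\<bar> \<le> B"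
    and f_diff: "\<forall>xs\<in>space (PiM {..<n} (\<lambda>_. Q)). \<forall>i<n. \<forall>y\<in>space Q. \<bar>f xs - f (xs(i:=y))\<bar> \<le> c"
  shows "measure (PiM {..<n} (\<lambda>_. Q))
      {xs\<in>space (PiM {..<n} (\<lambda>_. Q)). f xs - (\<integral>xs. f xs \<partial>PiM {..<n} (\<lambda>_. Q)) \<ge> t}
     \<le> exp (-2 * t\<^sup>2 / (real n * c\<^sup>2))"
proof -
  let ?P = "PiM {..<n} (\<lambda>_. Q)"
  interpret P: prob_space ?P by (rule prob_space_PiM) (rule Q)
  define E where "E = (\<integral>xs. f xs \<partial>?P)"
  define l where "l = 4 * t / (real n * c\<^sup>2)"
  have l: "l > 0" using c n t by (simp add: l_def)
  note f_meas[measurable]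
  have "ennreal (measure ?P {xs\<in>space ?P. f xs - E \<ge> t}) = emeasure ?P {xs\<in>space ?P. f xs - E \<ge> t}"
    by (simp add: P.emeasure_eq_measure)
  also have "\<dots> \<le> ennreal (exp (-l * t)) * (\<integral>\<^sup>+xs. ennreal (exp (l * (f xs - E))) * indicator (space ?P) xs \<partial>?P)"
    by (rule Chernoff_ineq_nn_integral_ge[OF l]) measurable
  also have "(\<integral>\<^sup>+xs. ennreal (exp (l * (f xs - E))) * indicator (space ?P) xs \<partial>?P)
      = (\<integral>\<^sup>+xs. ennreal (exp (l * (f xs - E))) \<partial>?P)"
    by (intro nn_integral_cong) auto
  also have "\<dots> \<le> ennreal (exp (l\<^sup>2 * real n * c\<^sup>2 / 8))"
    unfolding E_def by (rule mcdiarmid_exp_bound[OF Q l f_meas f_bound f_diff])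
  also have "ennreal (exp (-l * t)) * ennreal (exp (l\<^sup>2 * real n * c\<^sup>2 / 8))
      = ennreal (exp (-2 * t\<^sup>2 / (real n * c\<^sup>2)))"
    using c n by (simp add: ennreal_mult'[symmetric] exp_add[symmetric] l_def field_simps power2_eq_square)
  finally have "ennreal (measure ?P {xs\<in>space ?P. f xs - E \<ge> t}) \<le> ennreal (exp (-2 * t\<^sup>2 / (real n * c\<^sup>2)))"
    by (simp add: mult_left_mono del: ennreal_le_iff)
  then show ?thesis unfolding E_def by (subst (asm) ennreal_le_iff) auto
qed

lemma mcdiarmid:
  fixes Q :: "'b measure" and f :: "(nat \<Rightarrow> 'b) \<Rightarrow> real"
  assumes Q: "prob_space Q" and c: "c > 0" and n: "n > 0" and t: "t > 0"
    and f_meas: "f \<in> borel_measurable (PiM {..<n} (\<lambda>_. Q))"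
    and f_bound: "\<forall>xs\<in>space (PiM {..<n} (\<lambda>_. Q)). \<bar>f xs\<bar> \<le> B"
    and f_diff: "\<forall>xs\<in>space (PiM {..<n} (\<lambda>_. Q)). \<forall>i<n. \<forall>y\<in>space Q. \<bar>f xs - f (xs(i:=y))\<bar> \<le> c"
  shows "measure (PiM {..<n} (\<lambda>_. Q))
      {xs\<in>space (PiM {..<n} (\<lambda>_. Q)). \<bar>f xs - (\<integral>xs. f xs \<partial>PiM {..<n} (\<lambda>_. Q))\<bar> \<ge> t}
     \<le> 2 * exp (-2 * t\<^sup>2 / (real n * c\<^sup>2))"
proof -
  let ?P = "PiM {..<n} (\<lambda>_. Q)"
  let ?E = "\<lambda>f. \<integral>xs. f xs \<partial>?P"
  let ?tail = "\<lambda>f. measure ?P {xs\<in>space ?P. f xs - ?E f \<ge> t}"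
  interpret P: prob_space ?P by (rule prob_space_PiM) (rule Q)
  note f_meas[measurable]
  have neg_bound: "\<forall>xs\<in>space ?P. \<bar>- f xs\<bar> \<le> B" using f_bound by simp
  have neg_diff: "\<forall>xs\<in>space ?P. \<forall>i<n. \<forall>y\<in>space Q. \<bar>- f xs - - f (xs(i:=y))\<bar> \<le> c"
    using f_diff by (simp add: abs_minus_commute)
  have "measure ?P {xs\<in>space ?P. \<bar>f xs - ?E f\<bar> \<ge> t}
      = measure ?P ({xs\<in>space ?P. f xs - ?E f \<ge> t} \<union> {xs\<in>space ?P. - f xs - ?E (\<lambda>xs. - f xs) \<ge> t})"
    by (rule arg_cong[where f="measure ?P"]) auto
  also have "\<dots> \<le> ?tail f + ?tail (\<lambda>xs. - f xs)"
    by (intro measure_Un_le) measurable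
  also have "\<dots> \<le> 2 * exp (-2 * t\<^sup>2 / (real n * c\<^sup>2))"
    using mcdiarmid_upper_tail[OF Q c n t f_meas f_bound f_diff]
      mcdiarmid_upper_tail[OF Q c n t _ neg_bound neg_diff] by simp
  finally show ?thesis .
qed


section \<open>Entropy of an empirical distribution\<close>

definition empirical :: "nat \<Rightarrow> (nat \<Rightarrow> 'b) \<Rightarrow> 'b pmf" where
  "empirical N ys = map_pmf ys (pmf_of_set {..<N})"

definition occurrences :: "nat \<Rightarrow> (nat \<Rightarrow> 'b) \<Rightarrow> nat \<Rightarrow> nat" where
  "occurrences N ys u = card {v\<in>{..<N}. ys v = ys u}"

lemma occurrences_bounds:
  assumes "u < N"
  shows "1 \<le> occurrences N ys u" "occurrences N ys u \<le> N"
proof -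
  have "{v\<in>{..<N}. ys v = ys u} \<noteq> {}" using assms by blast
  then show "1 \<le> occurrences N ys u"
    unfolding occurrences_def by (simp add: Suc_le_eq card_gt_0_iff)
  have "occurrences N ys u \<le> card {..<N}"
    unfolding occurrences_def by (intro card_mono) auto
  then show "occurrences N ys u \<le> N" by simp
qed

lemma empirical_cong:
  "N \<ge> 1 \<Longrightarrow> (\<And>u. u < N \<Longrightarrow> ys u = zs u) \<Longrightarrow> empirical N ys = empirical N zs"
  unfolding empirical_def by (auto intro!: map_pmf_cong simp: lessThan_empty_iff)

lemma pmf_empirical:
  assumes "N \<ge> 1"
  shows "pmf (empirical N ys) y = real (card {u\<in>{..<N}. ys u = y}) / real N"
proof -
  have "pmf (empirical N ys) y = measure (pmf_of_set {..<N}) (ys -` {y})"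
    unfolding empirical_def by (rule pmf_map)
  also have "\<dots> = real (card ({..<N} \<inter> ys -` {y})) / real N"
    using assms by (simp add: measure_pmf_of_set lessThan_empty_iff)
  also have "{..<N} \<inter> ys -` {y} = {u\<in>{..<N}. ys u = y}" by auto
  finally show ?thesis .
qed

lemma set_pmf_empirical: "N \<ge> 1 \<Longrightarrow> set_pmf (empirical N ys) = ys ` {..<N}"
  by (simp add: empirical_def lessThan_empty_iff)

lemma shannon_entropy_empirical:
  assumes N: "N \<ge> 1"
  shows "shannon_entropy (empirical N ys) = ln (real N) - (\<Sum>u<N. ln (real (occurrences N ys u))) / real N"
proof -
  let ?q = "empirical N ys"
  have set_q: "set_pmf ?q = ys ` {..<N}" by (rule set_pmf_empirical[OF N])
  \<comment> \<open>Group the samples by value: each of the \<open>occurrences\<close> samples with value \<open>y\<close> contributes \<open>ln (pmf q y) / N\<close>.\<close>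
  have "(\<Sum>u<N. ln (real (occurrences N ys u) / real N) / real N)
      = (\<Sum>y\<in>ys ` {..<N}. \<Sum>u\<in>{u\<in>{..<N}. ys u = y}. ln (real (occurrences N ys u) / real N) / real N)"
    by (rule sum.image_gen) simp
  also have "\<dots> = (\<Sum>y\<in>ys ` {..<N}. pmf ?q y * ln (pmf ?q y))"
    by (intro sum.cong refl) (auto simp: occurrences_def pmf_empirical[OF N])
  finally have "shannon_entropy ?q = - (\<Sum>u<N. ln (real (occurrences N ys u) / real N)) / real N"
    unfolding shannon_entropy_def set_q by (simp add: sum_divide_distrib)
  also have "(\<Sum>u<N. ln (real (occurrences N ys u) / real N))
      = (\<Sum>u<N. ln (real (occurrences N ys u))) - real N * ln (real N)"
  proof -
    have "ln (real (occurrences N ys u) / real N) = ln (real (occurrences N ys u)) - ln (real N)"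
      if "u < N" for u
      using N occurrences_bounds(1)[OF that, of ys] by (simp add: ln_div)
    then show ?thesis by (simp add: sum_subtractf)
  qed
  finally show ?thesis using N by (simp add: field_simps)
qed

lemma shannon_entropy_empirical_bounds:
  assumes N: "N \<ge> 1"
  shows "0 \<le> shannon_entropy (empirical N ys)" "shannon_entropy (empirical N ys) \<le> ln (real N)"
proof -
  have occ: "1 \<le> real (occurrences N ys u)" "real (occurrences N ys u) \<le> real N" if "u < N" for u
    using occurrences_bounds[OF that] by simp_all
  then have "0 \<le> (\<Sum>u<N. ln (real (occurrences N ys u)))"
    by (intro sum_nonneg) simp
  moreover have "(\<Sum>u<N. ln (real (occurrences N ys u))) \<le> (\<Sum>u<N. ln (real N))"
  proof (intro sum_mono)
    fix u assume "u \<in> {..<N}"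
    with occ show "ln (real (occurrences N ys u)) \<le> ln (real N)" by (subst ln_le_cancel_iff) force+
  qed
  ultimately show "0 \<le> shannon_entropy (empirical N ys)" "shannon_entropy (empirical N ys) \<le> ln (real N)"
    using N unfolding shannon_entropy_empirical[OF N] by (simp_all add: field_simps)
qed

lemma abs_shannon_entropy_empirical_le: "N \<ge> 1 \<Longrightarrow> \<bar>shannon_entropy (empirical N ys)\<bar> \<le> ln (real N)"
  using shannon_entropy_empirical_bounds[of N ys] by simp

lemma shannon_entropy_empirical_one: "shannon_entropy (empirical 1 ys) = 0"
proof -
  have "{v\<in>{..<1::nat}. ys v = ys 0} = {0}" by auto
  then have "occurrences 1 ys 0 = 1" by (simp add: occurrences_def)
  then show ?thesis by (simp add: shannon_entropy_empirical)
qed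

text \<open>Removing sample \<open>i\<close>, whose value occurs \<open>k\<close> times, lowers the counts of the \<open>k - 1\<close> other samples
  with that value by one and leaves all other counts unchanged.\<close>

lemma sum_ln_occurrences_remove:
  fixes ys :: "nat \<Rightarrow> 'b"
  assumes i: "i < N"
  defines "k \<equiv> real (occurrences N ys i)"
  shows "(\<Sum>u<N. ln (real (occurrences N ys u)))
    = (\<Sum>u\<in>{..<N} - {i}. ln (real (card {v\<in>{..<N} - {i}. ys v = ys u}))) + ln k + (k - 1) * (ln k - ln (k - 1))"
proof -
  define T where "T = {u\<in>{..<N} - {i}. ys u = ys i}"
  let ?occ' = "\<lambda>u. card {v\<in>{..<N} - {i}. ys v = ys u}"
  have T_insert: "{v\<in>{..<N}. ys v = ys i} = insert i T" using i unfolding T_def by auto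
  then have card_T: "real (card T) = k - 1"
    unfolding k_def occurrences_def T_def by simp
  have occ_T: "occurrences N ys u = occurrences N ys i" "?occ' u = card T" if "u \<in> T" for u
    using that unfolding T_def occurrences_def by (auto intro: arg_cong[where f=card])
  have occ_not_T: "occurrences N ys u = ?occ' u" if "u \<in> {..<N} - {i} - T" for u
    using that unfolding T_def occurrences_def by (auto intro: arg_cong[where f=card])
  have "(\<Sum>u<N. ln (real (occurrences N ys u))) - (\<Sum>u\<in>{..<N} - {i}. ln (real (?occ' u)))
      = ln k + (\<Sum>u\<in>{..<N} - {i}. ln (real (occurrences N ys u)) - ln (real (?occ' u)))"
    using i unfolding k_def by (simp add: sum.remove[of _ i] sum_subtractf)
  also have "(\<Sum>u\<in>{..<N} - {i}. ln (real (occurrences N ys u)) - ln (real (?occ' u)))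
      = (\<Sum>u\<in>T. ln (real (occurrences N ys u)) - ln (real (?occ' u)))"
  proof (rule sum.mono_neutral_right)
    show "T \<subseteq> {..<N} - {i}" by (auto simp: T_def)
  qed (use occ_not_T in simp_all)
  also have "\<dots> = (k - 1) * (ln k - ln (k - 1))"
    using occ_T card_T by (simp add: k_def)
  finally show ?thesis by simp
qed

lemma ln_occurrence_gain_bounds:
  fixes k n :: nat
  assumes "1 \<le> k" "k \<le> n"
  shows "0 \<le> ln k + (real k - 1) * (ln k - ln (real k - 1))"
    "ln k + (real k - 1) * (ln k - ln (real k - 1)) \<le> 2 * ln n"
proof -
  have "0 \<le> (real k - 1) * (ln k - ln (real k - 1))"
    using assms(1) by (cases "k = 1") simp_all
  then show "0 \<le> ln k + (real k - 1) * (ln k - ln (real k - 1))"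
    using assms(1) by simp
  have gain: "(real k - 1) * (ln k - ln (real k - 1)) \<le> ln k"
  proof (cases "k \<le> 2")
    case True
    then show ?thesis using assms(1) by (cases "k = 1") (simp_all add: numeral_eq_Suc le_Suc_eq)
  next
    case False
    have pos: "real k - 1 > 0" using False by simp
    have "ln k - ln (real k - 1) = ln (real k / (real k - 1))" using pos by (simp add: ln_div)
    also have "\<dots> \<le> real k / (real k - 1) - 1" using pos by (intro ln_le_minus_one) auto
    also have "\<dots> = 1 / (real k - 1)" using pos by (simp add: field_simps)
    finally have "(real k - 1) * (ln k - ln (real k - 1)) \<le> 1"
      using pos by (simp add: field_simps)
    also have "1 < ln (3::real)" by (rule ln3_gt_1)
    also have "ln (3::real) \<le> ln k" using False by simp
    finally show ?thesis by simp
  qed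
  have "ln (real k) \<le> ln (real n)" using assms by simp
  then show "ln k + (real k - 1) * (ln k - ln (real k - 1)) \<le> 2 * ln n" using gain by simp
qed

lemma shannon_entropy_empirical_change_one:
  assumes N: "N \<ge> 1" and i: "i < N" and agree: "\<And>v. v \<noteq> i \<Longrightarrow> ys v = zs v"
  shows "\<bar>shannon_entropy (empirical N ys) - shannon_entropy (empirical N zs)\<bar> \<le> 2 * ln (real N) / real N"
proof -
  have "(\<Sum>u\<in>{..<N} - {i}. ln (real (card {v\<in>{..<N} - {i}. ys v = ys u})))
      = (\<Sum>u\<in>{..<N} - {i}. ln (real (card {v\<in>{..<N} - {i}. zs v = zs u})))"
  proof (intro sum.cong refl)
    fix u assume "u \<in> {..<N} - {i}"
    then have "{v\<in>{..<N} - {i}. ys v = ys u} = {v\<in>{..<N} - {i}. zs v = zs u}" using agree by auto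
    then show "ln (real (card {v\<in>{..<N} - {i}. ys v = ys u})) = ln (real (card {v\<in>{..<N} - {i}. zs v = zs u}))"
      by simp
  qed
  then have "\<bar>(\<Sum>u<N. ln (real (occurrences N ys u))) - (\<Sum>u<N. ln (real (occurrences N zs u)))\<bar>
      \<le> 2 * ln (real N)"
    using sum_ln_occurrences_remove[OF i, of ys] sum_ln_occurrences_remove[OF i, of zs]
      ln_occurrence_gain_bounds[OF occurrences_bounds[OF i, of ys]]
      ln_occurrence_gain_bounds[OF occurrences_bounds[OF i, of zs]]
    by (simp add: abs_le_iff)
  then show ?thesis
    using N unfolding shannon_entropy_empirical[OF N]
    by (simp add: abs_minus_commute diff_divide_distrib[symmetric] divide_right_mono)
qed


section \<open>Plug-in entropy of i.i.d. samples\<close>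

lemma mult_ln_div_bounds:
  fixes a b :: real
  assumes a: "0 \<le> a" and b: "0 < b"
  shows "a - b \<le> a * ln (a / b)" "a * ln (a / b) \<le> a * (a / b - 1)"
proof -
  show "a - b \<le> a * ln (a / b)"
  proof (cases "a = 0")
    case False
    then have a_pos: "a > 0" using a by simp
    have "a * ln (b / a) \<le> a * (b / a - 1)" using a_pos b by (intro mult_left_mono ln_le_minus_one) auto
    moreover have "ln (b / a) = - ln (a / b)" "a * (b / a - 1) = b - a"
      using a_pos b by (simp_all add: ln_div field_simps)
    ultimately show ?thesis by simp
  qed (use b in simp)
  show "a * ln (a / b) \<le> a * (a / b - 1)"
    using a b by (cases "a = 0") (auto intro: mult_left_mono ln_le_minus_one)
qed

lemma shannon_entropy_eq_sum:
  assumes "finite G" "set_pmf q \<subseteq> G"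
  shows "shannon_entropy q = - (\<Sum>g\<in>G. pmf q g * ln (pmf q g))"
  unfolding shannon_entropy_def using assms
  by (intro arg_cong[where f=uminus] sum.mono_neutral_left) (auto simp: set_pmf_iff)

lemma relative_entropy_bounds:
  fixes f P :: "'b \<Rightarrow> real"
  assumes G: "finite G" and f: "\<And>g. g \<in> G \<Longrightarrow> f g \<ge> 0" and P: "\<And>g. g \<in> G \<Longrightarrow> P g > 0"
    and sum_f: "(\<Sum>g\<in>G. f g) = 1" and sum_P: "(\<Sum>g\<in>G. P g) = 1" and c: "c > 0"
  shows "0 \<le> (\<Sum>g\<in>G. f g * ln (f g / P g))"
    "(\<Sum>g\<in>G. f g * ln (f g / P g)) \<le> (\<Sum>g\<in>G. (f g)\<^sup>2 / P g) / c - 1 + ln c"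
proof -
  have "0 = (\<Sum>g\<in>G. f g - P g)" using sum_f sum_P by (simp add: sum_subtractf)
  also have "\<dots> \<le> (\<Sum>g\<in>G. f g * ln (f g / P g))"
    using mult_ln_div_bounds(1)[OF f P] by (intro sum_mono)
  finally show "0 \<le> (\<Sum>g\<in>G. f g * ln (f g / P g))" .
  have "f g * ln (f g / P g) \<le> (f g)\<^sup>2 / P g / c - f g + f g * ln c" if g: "g \<in> G" for g
  proof (cases "f g = 0")
    case False
    then have "f g > 0" using f[OF g] by simp
    then have "f g * ln (f g / P g) = f g * ln (f g / (P g * c)) + f g * ln c"
      using P[OF g] c by (simp add: ln_div ln_mult algebra_simps)
    also have "\<dots> \<le> f g * (f g / (P g * c) - 1) + f g * ln c"
      using mult_ln_div_bounds(2)[OF f[OF g], of "P g * c"] P[OF g] c by simp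
    also have "\<dots> = (f g)\<^sup>2 / P g / c - f g + f g * ln c"
      by (simp add: power2_eq_square field_simps)
    finally show ?thesis .
  qed simp
  then have "(\<Sum>g\<in>G. f g * ln (f g / P g)) \<le> (\<Sum>g\<in>G. (f g)\<^sup>2 / P g / c - f g + f g * ln c)"
    by (intro sum_mono)
  also have "\<dots> = (\<Sum>g\<in>G. (f g)\<^sup>2 / P g) / c - 1 + ln c"
    using sum_f by (simp add: sum.distrib sum_subtractf sum_divide_distrib sum_distrib_right[symmetric])
  finally show "(\<Sum>g\<in>G. f g * ln (f g / P g)) \<le> (\<Sum>g\<in>G. (f g)\<^sup>2 / P g) / c - 1 + ln c" .
qed

lemma shannon_entropy_cross_entropy_bounds:
  assumes G: "finite G" and q: "set_pmf q \<subseteq> G" and P: "\<And>g. g \<in> G \<Longrightarrow> P g > 0"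
    and sum_P: "(\<Sum>g\<in>G. P g) = 1" and c: "c > 0"
  shows "shannon_entropy q \<le> - (\<Sum>g\<in>G. pmf q g * ln (P g))"
    "- (\<Sum>g\<in>G. pmf q g * ln (P g)) - ((\<Sum>g\<in>G. (pmf q g)\<^sup>2 / P g) / c - 1 + ln c) \<le> shannon_entropy q"
proof -
  have "pmf q g * ln (pmf q g) = pmf q g * ln (pmf q g / P g) + pmf q g * ln (P g)" if "g \<in> G" for g
    using P[OF that] by (cases "pmf q g = 0") (simp_all add: ln_div distrib_left[symmetric])
  then have "shannon_entropy q = - (\<Sum>g\<in>G. pmf q g * ln (P g)) - (\<Sum>g\<in>G. pmf q g * ln (pmf q g / P g))"
    unfolding shannon_entropy_eq_sum[OF G q] by (simp add: sum.distrib)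
  with relative_entropy_bounds[OF G pmf_nonneg P sum_pmf_eq_1[OF G q] sum_P c]
  show "shannon_entropy q \<le> - (\<Sum>g\<in>G. pmf q g * ln (P g))"
    "- (\<Sum>g\<in>G. pmf q g * ln (P g)) - ((\<Sum>g\<in>G. (pmf q g)\<^sup>2 / P g) / c - 1 + ln c) \<le> shannon_entropy q"
    by linarith+
qed

lemma sum_measure_values_eq_1:
  assumes Q: "prob_space Q" and G: "finite G" and AE_G: "AE x in Q. \<phi> x \<in> G"
    and sets: "\<And>g. {x\<in>space Q. \<phi> x = g} \<in> sets Q"
  shows "(\<Sum>g\<in>G. measure Q {x\<in>space Q. \<phi> x = g}) = 1"
proof -
  interpret Q: prob_space Q by (rule Q)
  have "(\<Sum>g\<in>G. measure Q {x\<in>space Q. \<phi> x = g}) = measure Q (\<Union>g\<in>G. {x\<in>space Q. \<phi> x = g})"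
    using G sets by (intro Q.finite_measure_finite_Union[symmetric]) (auto simp: disjoint_family_on_def)
  also have "(\<Union>g\<in>G. {x\<in>space Q. \<phi> x = g}) = {x\<in>space Q. \<phi> x \<in> G}" by auto
  also have "measure Q \<dots> = 1"
    using AE_G sets.finite_UN[OF G, of "\<lambda>g. {x\<in>space Q. \<phi> x = g}" Q] sets
    by (subst Q.prob_Collect_eq_1) (simp_all add: Collect_bex_eq[symmetric] Bex_def)
  finally show ?thesis .
qed

lemma (in prob_space) prob_abs_diff_le_gt:
  fixes f :: "'a \<Rightarrow> real"
  assumes f: "f \<in> borel_measurable M" and close: "\<bar>e - a\<bar> \<le> b"
    and tail: "prob {x\<in>space M. \<bar>f x - e\<bar> \<ge> t} < \<delta>"
  shows "prob {x\<in>space M. \<bar>f x - a\<bar> \<le> b + t} > 1 - \<delta>"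
proof -
  have "space M - {x\<in>space M. \<bar>f x - e\<bar> \<ge> t} \<subseteq> {x\<in>space M. \<bar>f x - a\<bar> \<le> b + t}"
  proof
    fix x assume "x \<in> space M - {x\<in>space M. \<bar>f x - e\<bar> \<ge> t}"
    then have "x \<in> space M" "\<bar>f x - e\<bar> < t" by (auto simp: not_le)
    moreover have "\<bar>f x - a\<bar> \<le> \<bar>f x - e\<bar> + \<bar>e - a\<bar>" using abs_triangle_ineq[of "f x - e" "e - a"] by simp
    ultimately show "x \<in> {x\<in>space M. \<bar>f x - a\<bar> \<le> b + t}" using close by simp
  qed
  then have "prob (space M - {x\<in>space M. \<bar>f x - e\<bar> \<ge> t}) \<le> prob {x\<in>space M. \<bar>f x - a\<bar> \<le> b + t}"
    using f by (intro finite_measure_mono) measurable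
  moreover have "prob (space M - {x\<in>space M. \<bar>f x - e\<bar> \<ge> t}) = 1 - prob {x\<in>space M. \<bar>f x - e\<bar> \<ge> t}"
    using f by (intro prob_compl) measurable
  ultimately show ?thesis using tail by linarith
qed

context
  fixes Q :: "'a measure" and \<phi> :: "'a \<Rightarrow> 'b::{second_countable_topology, t2_space}" and N :: nat
  assumes Q: "prob_space Q" and N: "N \<ge> 1" and \<phi>_meas[measurable]: "\<phi> \<in> borel_measurable Q"
begin

abbreviation "samples \<equiv> PiM {..<N} (\<lambda>_. Q)"

abbreviation "prob_value g \<equiv> measure Q {x\<in>space Q. \<phi> x = g}"

interpretation Q: prob_space Q by (rule Q)
interpretation PI: product_prob_space "\<lambda>_::nat. Q" "{..<N}" by unfold_locales

lemma measure_samples_space: "measure samples (space samples) = 1"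
  by (rule prob_space.prob_space) (simp add: prob_space_PiM Q)

lemma integrable_indicator_samples: "A \<in> sets samples \<Longrightarrow> integrable samples (indicator A :: _ \<Rightarrow> real)"
  by (intro integrable_real_indicator) (simp_all add: less_top[symmetric])

lemma prob_samples_all_equal:
  assumes "J \<subseteq> {..<N}"
  shows "measure samples {xs\<in>space samples. \<forall>j\<in>J. \<phi> (xs j) = g} = prob_value g ^ card J"
proof -
  have "{xs\<in>space samples. \<forall>j\<in>J. \<phi> (xs j) = g}
      = prod_emb {..<N} (\<lambda>_. Q) J (\<Pi>\<^sub>E j\<in>J. {x\<in>space Q. \<phi> x = g})"
    using assms by (fastforce simp: prod_emb_iff space_PiM PiE_iff extensional_def)
  then show ?thesis
    using assms by (simp add: PI.measure_PiM_emb finite_subset)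
qed

lemma pmf_empirical_samples:
  assumes "xs \<in> space samples"
  shows "pmf (empirical N (\<lambda>u. \<phi> (xs u))) g
    = (\<Sum>u<N. indicator {xs\<in>space samples. \<phi> (xs u) = g} xs) / real N"
proof -
  have "(\<Sum>u<N. indicator {xs\<in>space samples. \<phi> (xs u) = g} xs) = (\<Sum>u<N. of_bool (\<phi> (xs u) = g))"
    using assms by (intro sum.cong) (auto simp: indicator_def)
  also have "\<dots> = real (card ({..<N} \<inter> {u. \<phi> (xs u) = g}))" by simp
  also have "{..<N} \<inter> {u. \<phi> (xs u) = g} = {u\<in>{..<N}. \<phi> (xs u) = g}" by auto
  finally show ?thesis by (simp add: pmf_empirical[OF N])
qed

lemma measurable_pmf_empirical[measurable]:
  "(\<lambda>xs. pmf (empirical N (\<lambda>u. \<phi> (xs u))) g) \<in> borel_measurable samples"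
  by (subst measurable_cong[OF pmf_empirical_samples]) measurable

lemma measurable_shannon_entropy_empirical[measurable]:
  "(\<lambda>xs. shannon_entropy (empirical N (\<lambda>u. \<phi> (xs u)))) \<in> borel_measurable samples"
proof -
  have occ: "real (occurrences N (\<lambda>u. \<phi> (xs u)) u)
      = (\<Sum>v<N. indicator {xs\<in>space samples. \<phi> (xs v) = \<phi> (xs u)} xs)" if "xs \<in> space samples" for xs u
  proof -
    have "(\<Sum>v<N. indicator {xs\<in>space samples. \<phi> (xs v) = \<phi> (xs u)} xs) = (\<Sum>v<N. of_bool (\<phi> (xs v) = \<phi> (xs u)))"
      using that by (intro sum.cong) (auto simp: indicator_def)
    also have "\<dots> = real (card ({..<N} \<inter> {v. \<phi> (xs v) = \<phi> (xs u)}))" by simp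
    also have "{..<N} \<inter> {v. \<phi> (xs v) = \<phi> (xs u)} = {v\<in>{..<N}. \<phi> (xs v) = \<phi> (xs u)}" by auto
    finally show ?thesis by (simp add: occurrences_def)
  qed
  have "(\<lambda>xs. ln (real N) - (\<Sum>u<N. ln (\<Sum>v<N. indicator {xs\<in>space samples. \<phi> (xs v) = \<phi> (xs u)} xs)) / real N)
      \<in> borel_measurable samples"
    by measurable
  then show ?thesis
    by (rule measurable_cong[THEN iffD1, rotated]) (simp add: shannon_entropy_empirical[OF N] occ)
qed

lemma integrable_pmf_empirical: "integrable samples (\<lambda>xs. pmf (empirical N (\<lambda>u. \<phi> (xs u))) g)"
  by (intro PI.integrable_const_bound[where B=1]) (simp_all add: pmf_le_1)

lemma integrable_pmf_empirical_squared:
  "integrable samples (\<lambda>xs. (pmf (empirical N (\<lambda>u. \<phi> (xs u))) g)\<^sup>2)"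
  by (intro PI.integrable_const_bound[where B=1]) (simp_all add: pmf_le_1 power_le_one abs_le_iff)

lemma expectation_pmf_empirical:
  "(\<integral>xs. pmf (empirical N (\<lambda>u. \<phi> (xs u))) g \<partial>samples) = prob_value g"
proof -
  let ?E = "\<lambda>u. {xs\<in>space samples. \<phi> (xs u) = g}"
  have "(\<integral>xs. pmf (empirical N (\<lambda>u. \<phi> (xs u))) g \<partial>samples)
      = (\<integral>xs. (\<Sum>u<N. indicator (?E u) xs) / real N \<partial>samples)"
    by (intro Bochner_Integration.integral_cong refl pmf_empirical_samples)
  also have "\<dots> = (\<Sum>u<N. measure samples (?E u)) / real N"
    by (simp add: Bochner_Integration.integral_sum integrable_indicator_samples)
  also have "\<dots> = prob_value g"
    using N prob_samples_all_equal[of "{u}" g for u] by simp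
  finally show ?thesis .
qed

lemma expectation_pmf_empirical_squared:
  "(\<integral>xs. (pmf (empirical N (\<lambda>u. \<phi> (xs u))) g)\<^sup>2 \<partial>samples)
    = prob_value g / real N + (real N - 1) / real N * (prob_value g)\<^sup>2"
proof -
  let ?E1 = "\<lambda>u. {xs\<in>space samples. \<phi> (xs u) = g}"
  let ?E = "\<lambda>u v. ?E1 u \<inter> ?E1 v"
  have "(pmf (empirical N (\<lambda>u. \<phi> (xs u))) g)\<^sup>2 = (\<Sum>u<N. \<Sum>v<N. indicator (?E u v) xs) / (real N)\<^sup>2"
    if "xs \<in> space samples" for xs
    unfolding pmf_empirical_samples[OF that] power_divide
    by (simp add: power2_eq_square sum_product indicator_inter_arith)
  then have "(\<integral>xs. (pmf (empirical N (\<lambda>u. \<phi> (xs u))) g)\<^sup>2 \<partial>samples)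
      = (\<integral>xs. (\<Sum>u<N. \<Sum>v<N. indicator (?E u v) xs) / (real N)\<^sup>2 \<partial>samples)"
    by (intro Bochner_Integration.integral_cong) auto
  also have "\<dots> = (\<Sum>u<N. \<Sum>v<N. measure samples (?E u v)) / (real N)\<^sup>2"
    by (simp add: Bochner_Integration.integral_sum integrable_indicator_samples Int_absorb2)
  also have "\<dots> = (\<Sum>u<N. prob_value g + (real N - 1) * (prob_value g)\<^sup>2) / (real N)\<^sup>2"
  proof -
    have "(\<Sum>v<N. measure samples (?E u v)) = prob_value g + (real N - 1) * (prob_value g)\<^sup>2"
      if u: "u < N" for u
    proof -
      have "measure samples (?E u v) = (if v = u then prob_value g else (prob_value g)\<^sup>2)" if "v < N" for v
      proof -
        have "?E u v = {xs\<in>space samples. \<forall>j\<in>{u, v}. \<phi> (xs j) = g}" by auto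
        then show ?thesis using prob_samples_all_equal[of "{u, v}" g] u that by (simp add: power2_eq_square)
      qed
      then have "(\<Sum>v<N. measure samples (?E u v)) = (\<Sum>v<N. if v = u then prob_value g else (prob_value g)\<^sup>2)"
        by (intro sum.cong) auto
      also have "\<dots> = prob_value g + (real N - 1) * (prob_value g)\<^sup>2"
        using u by (simp add: sum.If_cases Int_commute[of _ "{u}"] Diff_eq[symmetric] of_nat_diff)
      finally show ?thesis .
    qed
    then show ?thesis by simp
  qed
  also have "\<dots> = prob_value g / real N + (real N - 1) / real N * (prob_value g)\<^sup>2"
    using N by (simp add: power2_eq_square field_simps)
  finally show ?thesis .
qed

lemma expectation_chi_square_empirical:
  assumes G: "finite G" and pos: "\<And>g. g \<in> G \<Longrightarrow> prob_value g > 0" and sum_P: "(\<Sum>g\<in>G. prob_value g) = 1"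
  shows "(\<integral>xs. (\<Sum>g\<in>G. (pmf (empirical N (\<lambda>u. \<phi> (xs u))) g)\<^sup>2 / prob_value g) \<partial>samples)
    = 1 + (real (card G) - 1) / real N"
proof -
  have "(\<integral>xs. (\<Sum>g\<in>G. (pmf (empirical N (\<lambda>u. \<phi> (xs u))) g)\<^sup>2 / prob_value g) \<partial>samples)
      = (\<Sum>g\<in>G. (prob_value g / real N + (real N - 1) / real N * (prob_value g)\<^sup>2) / prob_value g)"
    by (simp add: integrable_pmf_empirical_squared expectation_pmf_empirical_squared)
  also have "\<dots> = (\<Sum>g\<in>G. 1 / real N + (real N - 1) / real N * prob_value g)"
  proof (intro sum.cong refl)
    fix g assume "g \<in> G"
    then have "prob_value g \<noteq> 0" using pos by force
    with N show "(prob_value g / real N + (real N - 1) / real N * (prob_value g)\<^sup>2) / prob_value g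
        = 1 / real N + (real N - 1) / real N * prob_value g"
      by (simp add: power2_eq_square field_simps)
  qed
  also have "\<dots> = real (card G) / real N + (real N - 1) / real N * (\<Sum>g\<in>G. prob_value g)"
    by (simp add: sum.distrib sum_distrib_left)
  also have "\<dots> = 1 + (real (card G) - 1) / real N"
    using sum_P N by (simp add: field_simps)
  finally show ?thesis .
qed

lemma expectation_shannon_entropy_empirical_bounds:
  assumes G: "finite G" and AE_G: "AE x in Q. \<phi> x \<in> G" and pos: "\<And>g. g \<in> G \<Longrightarrow> prob_value g > 0"
  defines "H \<equiv> - (\<Sum>g\<in>G. prob_value g * ln (prob_value g))"
  shows "H - ln (1 + (real (card G) - 1) / real N)
      \<le> (\<integral>xs. shannon_entropy (empirical N (\<lambda>u. \<phi> (xs u))) \<partial>samples)"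
    "(\<integral>xs. shannon_entropy (empirical N (\<lambda>u. \<phi> (xs u))) \<partial>samples) \<le> H"
proof -
  let ?f = "\<lambda>xs g. pmf (empirical N (\<lambda>u. \<phi> (xs u))) g"
  let ?H = "\<lambda>xs. shannon_entropy (empirical N (\<lambda>u. \<phi> (xs u)))"
  define c where "c = 1 + (real (card G) - 1) / real N"
  define cross where "cross xs = - (\<Sum>g\<in>G. ?f xs g * ln (prob_value g))" for xs
  define S where "S xs = (\<Sum>g\<in>G. (?f xs g)\<^sup>2 / prob_value g)" for xs
  have sum_P: "(\<Sum>g\<in>G. prob_value g) = 1"
    using sum_measure_values_eq_1[OF Q G AE_G] by simp
  then have "G \<noteq> {}" by auto
  then have c: "c \<ge> 1" using G N by (simp add: c_def Suc_le_eq card_gt_0_iff)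
  have "AE xs in samples. \<forall>u\<in>{..<N}. \<phi> (xs u) \<in> G"
    using AE_G by (intro eventually_ball_finite ballI AE_PiM_component) (simp_all add: Q)
  then have AE_bounds: "AE xs in samples. cross xs - (S xs / c - 1 + ln c) \<le> ?H xs \<and> ?H xs \<le> cross xs"
  proof (rule eventually_mono)
    fix xs assume "\<forall>u\<in>{..<N}. \<phi> (xs u) \<in> G"
    then have "set_pmf (empirical N (\<lambda>u. \<phi> (xs u))) \<subseteq> G" by (auto simp: set_pmf_empirical[OF N])
    from shannon_entropy_cross_entropy_bounds[OF G this pos sum_P, of c] c
    show "cross xs - (S xs / c - 1 + ln c) \<le> ?H xs \<and> ?H xs \<le> cross xs"
      unfolding cross_def S_def by simp
  qed
  have int_H: "integrable samples ?H"
    using abs_shannon_entropy_empirical_le[OF N]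
    by (intro PI.integrable_const_bound[where B="ln (real N)"] AE_I2) simp_all
  have int_cross: "integrable samples cross" unfolding cross_def by (simp add: integrable_pmf_empirical)
  have int_S: "integrable samples S" unfolding S_def by (simp add: integrable_pmf_empirical_squared)
  have E_cross: "(\<integral>xs. cross xs \<partial>samples) = H"
    unfolding cross_def H_def by (simp add: integrable_pmf_empirical expectation_pmf_empirical)
  have E_S: "(\<integral>xs. S xs \<partial>samples) = c"
    unfolding S_def c_def by (rule expectation_chi_square_empirical[OF G pos sum_P])
  have "(\<integral>xs. cross xs - (S xs / c - 1 + ln c) \<partial>samples) \<le> (\<integral>xs. ?H xs \<partial>samples)"
    using AE_bounds int_cross int_S int_H by (intro integral_mono_AE) auto
  then show "H - ln (1 + (real (card G) - 1) / real N) \<le> (\<integral>xs. ?H xs \<partial>samples)"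
    using int_cross int_S E_cross E_S c by (simp add: c_def[symmetric] measure_samples_space)
  show "(\<integral>xs. ?H xs \<partial>samples) \<le> H"
    using AE_bounds int_cross int_H E_cross by (auto intro: integral_mono_AE[THEN order.trans])
qed

lemma shannon_entropy_empirical_concentration:
  assumes \<delta>: "0 < \<delta>" "\<delta> < 1" and s: "s > 0"
  defines "t \<equiv> sqrt (2 / real N * ln (2 / \<delta>)) * ln (real N) + s"
  shows "measure samples {xs\<in>space samples. \<bar>shannon_entropy (empirical N (\<lambda>u. \<phi> (xs u)))
      - (\<integral>xs. shannon_entropy (empirical N (\<lambda>u. \<phi> (xs u))) \<partial>samples)\<bar> \<ge> t} < \<delta>"
proof -
  let ?H = "\<lambda>xs. shannon_entropy (empirical N (\<lambda>u. \<phi> (xs u)))"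
  let ?B = "sqrt (2 / real N * ln (2 / \<delta>)) * ln (real N)"
  have ln_2\<delta>: "ln (2 / \<delta>) > 0" using \<delta> by simp
  have B: "?B \<ge> 0" using ln_2\<delta> N by simp
  show ?thesis
  proof (cases "N = 1")
    case True
    have "?H xs = 0" for xs unfolding True by (rule shannon_entropy_empirical_one)
    then have "{xs\<in>space samples. \<bar>?H xs - (\<integral>xs. ?H xs \<partial>samples)\<bar> \<ge> t} = {}"
      using B s by (simp add: t_def)
    then show ?thesis using \<delta> by (metis measure_empty)
  next
    case False
    then have ln_N: "ln (real N) > 0" using N by simp
    define c where "c = 2 * ln (real N) / real N"
    have c: "c > 0" using ln_N N by (simp add: c_def)
    have "measure samples {xs\<in>space samples. \<bar>?H xs - (\<integral>xs. ?H xs \<partial>samples)\<bar> \<ge> t}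
        \<le> 2 * exp (-2 * t\<^sup>2 / (real N * c\<^sup>2))"
    proof (rule mcdiarmid[OF Q c _ _ measurable_shannon_entropy_empirical])
      show "\<forall>xs\<in>space samples. \<bar>?H xs\<bar> \<le> ln (real N)"
        using abs_shannon_entropy_empirical_le[OF N] by blast
      show "\<forall>xs\<in>space samples. \<forall>i<N. \<forall>y\<in>space Q. \<bar>?H xs - ?H (xs(i:=y))\<bar> \<le> c"
        unfolding c_def by (intro ballI allI impI shannon_entropy_empirical_change_one[OF N]) auto
    qed (use N B s in \<open>simp_all add: t_def\<close>)
    also have "\<dots> < 2 * exp (-2 * ?B\<^sup>2 / (real N * c\<^sup>2))"
      using B s N c by (simp add: t_def power_strict_mono divide_strict_right_mono)
    also have "-2 * ?B\<^sup>2 / (real N * c\<^sup>2) = - ln (2 / \<delta>)"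
      using ln_2\<delta> ln_N N by (simp add: c_def power_mult_distrib power2_eq_square field_simps)
    also have "2 * exp (- ln (2 / \<delta>)) = \<delta>" using \<delta> by (simp add: exp_minus)
    finally show ?thesis .
  qed
qed

end

section \<open>Quantization cells\<close>

lemma measurable_quantize[measurable]: "quantize m \<in> borel_measurable (borel :: (real ^ 'n) measure)"
proof (subst borel_measurable_euclidean_space, intro ballI)
  fix b :: "real ^ 'n" assume "b \<in> Basis"
  then obtain j where b: "b = axis j 1" by (auto simp: Basis_vec_def)
  show "(\<lambda>x. quantize m x \<bullet> b) \<in> borel_measurable borel"
    unfolding b quantize_def inner_axis by simp
qed

definition quantization_cell :: "nat \<Rightarrow> real ^ 'n \<Rightarrow> (real ^ 'n) set" where
  "quantization_cell m g = {v. quantize m v = g}"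

lemma sets_quantization_cell[measurable]: "quantization_cell m g \<in> sets borel"
  using measurable_sets[OF measurable_quantize, of "{g}" m] by (simp add: quantization_cell_def vimage_def)

lemma sets_unit_cube[measurable]: "(unit_cube :: (real ^ 'n) set) \<in> sets borel"
  unfolding unit_cube_def
  by (intro borel_closed closed_Collect_all closed_Collect_conj closed_Collect_le continuous_intros)

definition grid :: "nat \<Rightarrow> (real ^ 'n) set" where
  "grid m = (\<lambda>k. \<chi> i. real_of_int (k i) / real m) ` (\<Pi>\<^sub>E i\<in>UNIV. {0..<int m})"

lemma finite_grid: "finite (grid m)"
  unfolding grid_def by (intro finite_imageI finite_PiE) auto

lemma card_grid_le: "card (grid m :: (real ^ 'n) set) \<le> m ^ CARD('n)"
proof -
  have "card (grid m :: (real ^ 'n) set) \<le> card (\<Pi>\<^sub>E i\<in>(UNIV :: 'n set). {0..<int m})"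
    unfolding grid_def by (intro card_image_le finite_PiE) auto
  then show ?thesis by (simp add: card_PiE)
qed

lemma quantize_in_grid:
  assumes m: "m > 0" and v: "v \<in> unit_cube" "\<And>j. v $ j \<noteq> 1"
  shows "quantize m v \<in> grid m"
proof -
  have "\<lfloor>real m * v $ i\<rfloor> \<in> {0..<int m}" for i
  proof -
    have "0 \<le> v $ i" "v $ i < 1" using v le_less by (auto simp: unit_cube_def)
    then have "0 \<le> real m * v $ i" "real m * v $ i < real m" using m by auto
    then show ?thesis by (simp add: floor_less_iff)
  qed
  then show ?thesis
    unfolding grid_def quantize_def
    by (intro image_eqI[where x="\<lambda>i. \<lfloor>real m * v $ i\<rfloor>"]) auto
qed

lemma quantization_cell_grid:
  assumes m: "m > 0" and g: "g \<in> grid m"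
  shows "quantization_cell m g = {v. \<forall>i. g $ i \<le> v $ i \<and> v $ i < g $ i + 1 / real m}"
proof -
  obtain k where g_eq: "g = (\<chi> i. real_of_int (k i) / real m)" using g by (auto simp: grid_def)
  have "\<lfloor>real m * v $ i\<rfloor> = k i \<longleftrightarrow> g $ i \<le> v $ i \<and> v $ i < g $ i + 1 / real m" for v i
    using m by (simp add: g_eq floor_eq_iff field_simps)
  then show ?thesis
    using m by (auto simp: quantization_cell_def quantize_def g_eq vec_eq_iff)
qed

lemma measure_quantization_cell:
  fixes g :: "real ^ 'n"
  assumes m: "m > 0" and g: "g \<in> grid m"
  shows "emeasure lborel (quantization_cell m g) = ennreal ((1 / real m) ^ CARD('n))"
    "measure lborel (quantization_cell m g) = (1 / real m) ^ CARD('n)"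
proof -
  define b where "b = g + (\<chi> i. 1 / real m)"
  have cell: "box g b \<subseteq> quantization_cell m g" "quantization_cell m g \<subseteq> cbox g b"
    unfolding quantization_cell_grid[OF m g] by (fastforce simp: b_def mem_box_cart less_imp_le)+
  have "g \<in> cbox g b" using m by (simp add: b_def mem_box_cart)
  then have "measure lborel (cbox g b) = (\<Prod>i\<in>UNIV. b $ i - g $ i)" by (intro content_cbox_cart) auto
  then have cbox: "measure lborel (cbox g b) = (1 / real m) ^ CARD('n)" by (simp add: b_def)
  have "emeasure lborel (box g b) \<le> emeasure lborel (quantization_cell m g)"
    "emeasure lborel (quantization_cell m g) \<le> emeasure lborel (cbox g b)"
    by (intro emeasure_mono cell; simp)+
  then have "emeasure lborel (quantization_cell m g) = emeasure lborel (cbox g b)"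
    by (simp add: emeasure_lborel_box_eq emeasure_lborel_cbox_eq)
  also have "\<dots> = ennreal ((1 / real m) ^ CARD('n))"
    using cbox emeasure_lborel_cbox_finite[of g b] by (simp add: emeasure_eq_ennreal_measure)
  finally show "emeasure lborel (quantization_cell m g) = ennreal ((1 / real m) ^ CARD('n))" .
  then show "measure lborel (quantization_cell m g) = (1 / real m) ^ CARD('n)"
    by (simp add: measure_def)
qed

lemma quantize_eq_imp_abs_diff_less:
  assumes m: "m > 0" and "quantize m v = quantize m w"
  shows "\<bar>v $ i - w $ i\<bar> < 1 / real m"
proof -
  have "\<lfloor>real m * v $ i\<rfloor> = \<lfloor>real m * w $ i\<rfloor>"
    using assms by (simp add: quantize_def vec_eq_iff)
  then have "\<bar>real m * v $ i - real m * w $ i\<bar> < 1"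
    using floor_correct[of "real m * v $ i"] floor_correct[of "real m * w $ i"] by linarith
  also have "\<bar>real m * v $ i - real m * w $ i\<bar> = real m * \<bar>v $ i - w $ i\<bar>"
    by (simp add: abs_mult flip: right_diff_distrib)
  finally show ?thesis using m by (simp add: pos_less_divide_eq mult.commute)
qed

lemma null_sets_coordinate_hyperplane: "{v :: real ^ 'n. v $ j = c} \<in> null_sets lborel"
proof -
  have "negligible {v :: real ^ 'n. v \<bullet> axis j 1 = c}"
    by (rule negligible_standard_hyperplane) (force simp: Basis_vec_def)
  then have "{v :: real ^ 'n. v $ j = c} \<in> null_sets (completion lborel)"
    by (simp add: negligible_iff_null_sets inner_axis)
  moreover have "{v :: real ^ 'n. v $ j = c} \<in> sets borel" by measurable
  ultimately show ?thesis by (simp add: null_sets_completion_iff)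
qed


section \<open>Densities on the unit cube\<close>

locale cube_density =
  fixes p :: "real ^ 'n \<Rightarrow> real"
  assumes nonneg: "\<And>v. 0 \<le> p v"
    and borel_measurable_p[measurable]: "p \<in> borel_measurable borel"
    and prob_space_law: "prob_space (density lborel (\<lambda>v. ennreal (p v)))"
    and measure_law_unit_cube: "measure (density lborel (\<lambda>v. ennreal (p v))) unit_cube = 1"
begin

abbreviation "law \<equiv> density lborel (\<lambda>v. ennreal (p v))"

sublocale law: prob_space law by (rule prob_space_law)

definition cell_prob :: "nat \<Rightarrow> real ^ 'n \<Rightarrow> real" where
  "cell_prob m g = measure law (quantization_cell m g)"

definition charged_cells :: "nat \<Rightarrow> (real ^ 'n) set" where
  "charged_cells m = {g \<in> grid m. cell_prob m g > 0}"

lemma finite_charged_cells: "finite (charged_cells m)"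
  by (rule finite_subset[OF _ finite_grid]) (auto simp: charged_cells_def)

lemma card_charged_cells_le: "card (charged_cells m) \<le> m ^ CARD('n)"
  by (rule order.trans[OF card_mono[OF finite_grid] card_grid_le]) (auto simp: charged_cells_def)

lemma AE_quantize_charged_cells:
  assumes m: "m > 0"
  shows "AE v in law. quantize m v \<in> charged_cells m"
proof -
  have "AE v in law. v \<in> unit_cube"
    using measure_law_unit_cube by (intro law.AE_prob_1) simp
  moreover have "AE v in law. \<forall>j. v $ j \<noteq> 1"
  proof -
    have "AE v in lborel. (v :: real ^ 'n) $ j \<noteq> 1" for j
      by (rule eventually_mono[OF AE_not_in[OF null_sets_coordinate_hyperplane[of j 1]]]) simp
    then have "AE v in lborel. \<forall>j. (v :: real ^ 'n) $ j \<noteq> 1" by (rule eventually_all_finite)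
    then show ?thesis by (subst AE_density) (auto elim: eventually_mono)
  qed
  moreover have "AE v in law. \<forall>g\<in>grid m. quantize m v = g \<longrightarrow> cell_prob m g > 0"
  proof (intro eventually_ball_finite finite_grid ballI)
    fix g
    show "AE v in law. quantize m v = g \<longrightarrow> cell_prob m g > 0"
    proof (cases "cell_prob m g > 0")
      case False
      then have "quantization_cell m g \<in> null_sets law"
        using measure_nonneg[of law "quantization_cell m g"]
        by (simp add: cell_prob_def law.emeasure_eq_measure null_sets_def)
      then show ?thesis by (rule AE_I') (auto simp: quantization_cell_def)
    qed simp
  qed
  ultimately show ?thesis
    by eventually_elim (use quantize_in_grid[OF m] in \<open>auto simp: charged_cells_def\<close>)
qed

lemma sum_cell_prob_charged_cells:
  assumes "m > 0"
  shows "(\<Sum>g\<in>charged_cells m. cell_prob m g) = 1"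
  using sum_measure_values_eq_1[OF prob_space_law finite_charged_cells AE_quantize_charged_cells[OF assms]]
  by (simp add: cell_prob_def quantization_cell_def)

lemma AE_density_zero_outside_charged_cells:
  assumes "m > 0"
  shows "AE v in lborel. quantize m v \<notin> charged_cells m \<longrightarrow> p v = 0"
  using AE_quantize_charged_cells[OF assms] nonneg
  by (subst (asm) AE_density) (auto elim!: eventually_mono simp: order.order_iff_strict)

lemma integrable_density: "integrable lborel p"
proof (rule integrableI_nonneg)
  have "(\<integral>\<^sup>+ v. ennreal (p v) \<partial>lborel) = emeasure law (space law)"
    by (simp add: emeasure_density)
  then show "(\<integral>\<^sup>+ v. ennreal (p v) \<partial>lborel) < \<infinity>" using law.emeasure_space_1 by simp
qed (simp_all add: nonneg)

lemma cell_prob_eq_integral: "cell_prob m g = (\<integral>v. p v * indicator (quantization_cell m g) v \<partial>lborel)"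
proof -
  have "emeasure law (quantization_cell m g) = (\<integral>\<^sup>+ v. ennreal (p v * indicator (quantization_cell m g) v) \<partial>lborel)"
    by (subst emeasure_density) (auto intro!: nn_integral_cong simp: indicator_def)
  also have "\<dots> = ennreal (\<integral>v. p v * indicator (quantization_cell m g) v \<partial>lborel)"
    using integrable_density nonneg
    by (intro nn_integral_eq_integral integrable_real_mult_indicator) auto
  finally show ?thesis
    using nonneg unfolding cell_prob_def law.emeasure_eq_measure
    by (simp add: integral_nonneg_AE)
qed

end


lemma abs_mult_ln_le:
  fixes t :: real
  assumes "0 \<le> t"
  shows "\<bar>t * ln t\<bar> \<le> t\<^sup>2 + 1"
proof -
  have "t - 1 \<le> t * ln t" "t * ln t \<le> t * (t - 1)" using mult_ln_div_bounds[OF assms, of 1] by simp_all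
  moreover have "0 \<le> t * t" using assms by simp
  ultimately show ?thesis unfolding abs_le_iff power2_eq_square right_diff_distrib using assms by linarith
qed

locale lipschitz_cube_density = cube_density p for p :: "real ^ 'n \<Rightarrow> real" +
  fixes L :: real
  assumes lipschitz: "\<And>v w. \<bar>p v - p w\<bar> \<le> L * (\<Sum>i\<in>UNIV. \<bar>v $ i - w $ i\<bar>)"
begin

lemma lipschitz_const_nonneg: "L \<ge> 0"
proof -
  have "0 \<le> L * (\<Sum>i\<in>UNIV. \<bar>(0 :: real ^ 'n) $ i - (vec 1 :: real ^ 'n) $ i\<bar>)"
    using lipschitz[of 0 "vec 1"] abs_ge_zero[of "p 0 - p (vec 1)"] by linarith
  then show ?thesis by (simp add: zero_le_mult_iff)
qed

lemma density_le_same_cell: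
  assumes m: "m > 0" and same: "quantize m v = quantize m w"
  shows "p v \<le> p w + L * real CARD('n) / real m"
proof -
  have "(\<Sum>i\<in>UNIV. \<bar>v $ i - w $ i\<bar>) \<le> (\<Sum>i\<in>(UNIV :: 'n set). 1 / real m)"
    by (intro sum_mono order.strict_implies_order quantize_eq_imp_abs_diff_less[OF m same])
  also have "\<dots> = real CARD('n) / real m" by simp
  finally have "(\<Sum>i\<in>UNIV. \<bar>v $ i - w $ i\<bar>) \<le> real CARD('n) / real m" .
  then have "L * (\<Sum>i\<in>UNIV. \<bar>v $ i - w $ i\<bar>) \<le> L * (real CARD('n) / real m)"
    using lipschitz_const_nonneg by (rule mult_left_mono)
  then show ?thesis using lipschitz[of v w] by simp
qed

lemma density_le_cell_mean:
  assumes m: "m > 0" and g: "g \<in> grid m" and v: "v \<in> quantization_cell m g"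
  shows "p v \<le> cell_prob m g / (1 / real m) ^ CARD('n) + L * real CARD('n) / real m"
proof -
  let ?C = "quantization_cell m g" and ?V = "(1 / real m) ^ CARD('n)" and ?w = "L * real CARD('n) / real m"
  have int_C: "integrable lborel (\<lambda>z. c * indicator ?C z)" for c :: real
    using measure_quantization_cell(1)[OF m g] by simp
  have int_pC: "integrable lborel (\<lambda>z. p z * indicator ?C z)"
    by (intro integrable_real_mult_indicator integrable_density) simp
  have "p v * ?V = (\<integral>z. p v * indicator ?C z \<partial>lborel)"
    using measure_quantization_cell(2)[OF m g] by simp
  also have "\<dots> \<le> (\<integral>z. p z * indicator ?C z + ?w * indicator ?C z \<partial>lborel)"
    using v density_le_same_cell[OF m, of v] int_C int_pC
    by (intro integral_mono) (auto simp: indicator_def quantization_cell_def algebra_simps)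
  also have "\<dots> = cell_prob m g + ?w * ?V"
    using int_C int_pC measure_quantization_cell(2)[OF m g] by (simp add: cell_prob_eq_integral)
  finally show ?thesis using m by (simp add: field_simps)
qed

lemma integrable_entropy_integrand_cell:
  assumes m: "m > 0" and g: "g \<in> grid m"
  shows "integrable lborel (\<lambda>v. p v * ln (p v) * indicator (quantization_cell m g) v)"
proof (rule Bochner_Integration.integrable_bound)
  let ?C = "quantization_cell m g"
  define B where "B = cell_prob m g / (1 / real m) ^ CARD('n) + L * real CARD('n) / real m"
  show "integrable lborel (\<lambda>v. (B\<^sup>2 + 1) * indicator ?C v)"
    using measure_quantization_cell(1)[OF m g] by simp
  have "\<bar>p v * ln (p v)\<bar> \<le> B\<^sup>2 + 1" if "v \<in> ?C" for v
  proof -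
    have "p v \<le> B" using density_le_cell_mean[OF m g that] by (simp add: B_def)
    then have "(p v)\<^sup>2 \<le> B\<^sup>2" using nonneg[of v] by (intro power_mono)
    then show ?thesis using abs_mult_ln_le[OF nonneg, of v] by linarith
  qed
  then show "AE v in lborel. norm (p v * ln (p v) * indicator ?C v) \<le> norm ((B\<^sup>2 + 1) * indicator ?C v)"
    by (intro AE_I2) (simp add: indicator_def)
qed measurable

lemma integral_relative_entropy_cell:
  assumes m: "m > 0" and g: "g \<in> charged_cells m"
  defines "\<mu> \<equiv> cell_prob m g / (1 / real m) ^ CARD('n)"
  shows "integrable lborel (\<lambda>v. p v * ln (p v / \<mu>) * indicator (quantization_cell m g) v)"
    "(\<integral>v. p v * ln (p v / \<mu>) * indicator (quantization_cell m g) v \<partial>lborel)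
      = (\<integral>v. p v * ln (p v) * indicator (quantization_cell m g) v \<partial>lborel) - cell_prob m g * ln \<mu>"
proof -
  let ?C = "quantization_cell m g"
  have g_grid: "g \<in> grid m" and "cell_prob m g > 0" using g by (auto simp: charged_cells_def)
  then have \<mu>: "\<mu> > 0" using m by (simp add: \<mu>_def)
  have int_pC: "integrable lborel (\<lambda>v. p v * indicator ?C v)"
    by (intro integrable_real_mult_indicator integrable_density) simp
  have eq: "p v * ln (p v / \<mu>) * indicator ?C v = p v * ln (p v) * indicator ?C v - ln \<mu> * (p v * indicator ?C v)" for v
    using \<mu> nonneg[of v] by (cases "p v = 0") (simp_all add: ln_div algebra_simps)
  show "integrable lborel (\<lambda>v. p v * ln (p v / \<mu>) * indicator ?C v)"
    unfolding eq using integrable_entropy_integrand_cell[OF m g_grid] int_pC by simp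
  show "(\<integral>v. p v * ln (p v / \<mu>) * indicator ?C v \<partial>lborel)
      = (\<integral>v. p v * ln (p v) * indicator ?C v \<partial>lborel) - cell_prob m g * ln \<mu>"
    unfolding eq using integrable_entropy_integrand_cell[OF m g_grid] int_pC
    by (simp add: cell_prob_eq_integral)
qed

text \<open>Against the mean density \<open>\<mu>\<close> of a cell, \<open>p ln (p / \<mu>)\<close> lies between \<open>p - \<mu>\<close>, which integrates
  to zero over the cell, and \<open>p (p / \<mu> - 1) \<le> p w / \<mu>\<close>, where \<open>w\<close> bounds the oscillation of \<open>p\<close> on the cell.\<close>

lemma cell_entropy_bounds:
  assumes m: "m > 0" and g: "g \<in> charged_cells m"
  defines "V \<equiv> (1 / real m) ^ CARD('n)"
  defines "J \<equiv> \<integral>v. p v * ln (p v) * indicator (quantization_cell m g) v \<partial>lborel"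
  shows "0 \<le> J - cell_prob m g * ln (cell_prob m g / V)"
    "J - cell_prob m g * ln (cell_prob m g / V) \<le> L * real CARD('n) / real m * V"
proof -
  let ?C = "quantization_cell m g" and ?P = "cell_prob m g" and ?w = "L * real CARD('n) / real m"
  define \<mu> where "\<mu> = ?P / V"
  let ?D = "\<lambda>v. p v * ln (p v / \<mu>) * indicator ?C v"
  have g_grid: "g \<in> grid m" and P_pos: "?P > 0" using g by (auto simp: charged_cells_def)
  have V: "V > 0" using m by (simp add: V_def)
  have \<mu>: "\<mu> > 0" using P_pos V by (simp add: \<mu>_def)
  have int_C: "integrable lborel (\<lambda>v. c * indicator ?C v)" for c :: real
    using measure_quantization_cell(1)[OF m g_grid] by simp
  have int_pC: "integrable lborel (\<lambda>v. p v * indicator ?C v)"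
    by (intro integrable_real_mult_indicator integrable_density) simp
  note D = integral_relative_entropy_cell[OF m g, folded V_def, folded \<mu>_def J_def]
  have "0 = (\<integral>v. (p v - \<mu>) * indicator ?C v \<partial>lborel)"
    using int_pC int_C[of \<mu>] measure_quantization_cell(2)[OF m g_grid] V m
    by (simp add: left_diff_distrib cell_prob_eq_integral[symmetric] \<mu>_def V_def)
  also have "\<dots> \<le> (\<integral>v. ?D v \<partial>lborel)"
    using int_pC int_C[of \<mu>] D(1) mult_ln_div_bounds(1)[OF nonneg \<mu>]
    by (intro integral_mono) (auto simp: left_diff_distrib indicator_def)
  finally show "0 \<le> J - ?P * ln (?P / V)" using D(2) by (simp add: \<mu>_def)
  have "?D v \<le> ?w / \<mu> * (p v * indicator ?C v)" for v
  proof (cases "v \<in> ?C")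
    case True
    have "p v * ln (p v / \<mu>) \<le> p v * (p v / \<mu> - 1)" by (rule mult_ln_div_bounds(2)[OF nonneg \<mu>])
    also have "\<dots> \<le> p v * (?w / \<mu>)"
    proof (rule mult_left_mono[OF _ nonneg])
      have "p v \<le> \<mu> + ?w" using density_le_cell_mean[OF m g_grid True] by (simp add: \<mu>_def V_def)
      then show "p v / \<mu> - 1 \<le> ?w / \<mu>" using \<mu> by (simp add: field_simps)
    qed
    finally show ?thesis using True by (simp add: mult_ac)
  qed simp
  then have "(\<integral>v. ?D v \<partial>lborel) \<le> (\<integral>v. ?w / \<mu> * (p v * indicator ?C v) \<partial>lborel)"
    using D(1) int_pC by (intro integral_mono) auto
  also have "\<dots> = ?w * V"
    using \<mu> V P_pos by (simp add: cell_prob_eq_integral[symmetric] \<mu>_def)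
  finally show "J - ?P * ln (?P / V) \<le> ?w * V" using D(2) by (simp add: \<mu>_def)
qed

lemma diff_entropy_eq_sum_cells:
  assumes m: "m > 0"
  shows "diff_entropy p
    = - (\<Sum>g\<in>charged_cells m. \<integral>v. p v * ln (p v) * indicator (quantization_cell m g) v \<partial>lborel)"
proof -
  let ?G = "charged_cells m" and ?C = "quantization_cell m"
  have grid: "g \<in> grid m" if "g \<in> ?G" for g using that by (simp add: charged_cells_def)
  have "(\<integral>v. p v * ln (p v) \<partial>lborel) = (\<integral>v. (\<Sum>g\<in>?G. p v * ln (p v) * indicator (?C g) v) \<partial>lborel)"
  proof (rule integral_cong_AE)
    show "AE v in lborel. p v * ln (p v) = (\<Sum>g\<in>?G. p v * ln (p v) * indicator (?C g) v)"
      using AE_density_zero_outside_charged_cells[OF m]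
    proof eventually_elim
      case (elim v)
      have "(\<Sum>g\<in>?G. p v * ln (p v) * indicator (?C g) v) = (\<Sum>g\<in>?G. if quantize m v = g then p v * ln (p v) else 0)"
        by (intro sum.cong) (auto simp: indicator_def quantization_cell_def)
      then show ?case using elim by (simp add: sum.delta'[OF finite_charged_cells])
    qed
  qed measurable
  also have "\<dots> = (\<Sum>g\<in>?G. \<integral>v. p v * ln (p v) * indicator (?C g) v \<partial>lborel)"
    using integrable_entropy_integrand_cell[OF m grid] by (simp add: Bochner_Integration.integral_sum)
  finally show ?thesis by (simp add: diff_entropy_def)
qed

lemma discretization_error:
  assumes m: "m > 0"
  defines "H \<equiv> - (\<Sum>g\<in>charged_cells m. cell_prob m g * ln (cell_prob m g))"
  shows "0 \<le> H - real CARD('n) * ln (real m) - diff_entropy p"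
    "H - real CARD('n) * ln (real m) - diff_entropy p \<le> L * real CARD('n) / real m"
proof -
  let ?G = "charged_cells m"
  define V where "V = (1 / real m) ^ CARD('n)"
  define J where "J g = (\<integral>v. p v * ln (p v) * indicator (quantization_cell m g) v \<partial>lborel)" for g
  have h: "diff_entropy p = - (\<Sum>g\<in>?G. J g)"
    unfolding J_def by (rule diff_entropy_eq_sum_cells[OF m])
  have "ln (cell_prob m g / V) = ln (cell_prob m g) + real CARD('n) * ln (real m)" if "g \<in> ?G" for g
    using that m by (simp add: charged_cells_def V_def ln_div ln_realpow)
  then have "(\<Sum>g\<in>?G. J g - cell_prob m g * ln (cell_prob m g / V))
      = (\<Sum>g\<in>?G. J g - cell_prob m g * ln (cell_prob m g) - cell_prob m g * (real CARD('n) * ln (real m)))"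
    by (intro sum.cong) (simp_all add: algebra_simps)
  also have "\<dots> = (\<Sum>g\<in>?G. J g) + H - (\<Sum>g\<in>?G. cell_prob m g) * (real CARD('n) * ln (real m))"
    by (simp add: H_def sum_subtractf sum_distrib_right)
  finally have eq: "H - real CARD('n) * ln (real m) - diff_entropy p
      = (\<Sum>g\<in>?G. J g - cell_prob m g * ln (cell_prob m g / V))"
    using h sum_cell_prob_charged_cells[OF m] by simp
  show "0 \<le> H - real CARD('n) * ln (real m) - diff_entropy p"
    unfolding eq using cell_entropy_bounds(1)[OF m] by (intro sum_nonneg) (simp add: J_def V_def)
  have "(\<Sum>g\<in>?G. J g - cell_prob m g * ln (cell_prob m g / V))
      \<le> real (card ?G) * (L * real CARD('n) / real m * V)"
    by (rule sum_bounded_above) (use cell_entropy_bounds(2)[OF m] in \<open>simp add: J_def V_def\<close>)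
  also have "\<dots> \<le> real (m ^ CARD('n)) * (L * real CARD('n) / real m * V)"
    using card_charged_cells_le lipschitz_const_nonneg V_def
    by (intro mult_right_mono) (simp_all add: of_nat_le_iff[symmetric] del: of_nat_le_iff)
  also have "\<dots> = L * real CARD('n) / real m"
    using m by (simp add: V_def power_one_over)
  finally show "H - real CARD('n) * ln (real m) - diff_entropy p \<le> L * real CARD('n) / real m"
    unfolding eq .
qed


lemma expectation_entropy_estimate_error:
  assumes m: "m > 0" and N: "N \<ge> 1"
  shows "\<bar>(\<integral>xs. shannon_entropy (empirical N (\<lambda>u. quantize m (xs u))) \<partial>PiM {..<N} (\<lambda>_. law))
      - real CARD('n) * ln (real m) - diff_entropy p\<bar>
    \<le> L * real CARD('n) / real m + ln (1 + (real m ^ CARD('n) - 1) / real N)"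
proof -
  let ?G = "charged_cells m"
  define H where "H = - (\<Sum>g\<in>?G. cell_prob m g * ln (cell_prob m g))"
  have prob_value_eq: "measure law {x\<in>space law. quantize m x = g} = cell_prob m g" for g
    by (simp add: cell_prob_def quantization_cell_def)
  have pos: "0 < measure law {x\<in>space law. quantize m x = g}" if "g \<in> ?G" for g
    using that unfolding prob_value_eq by (simp add: charged_cells_def)
  note bias = expectation_shannon_entropy_empirical_bounds[OF prob_space_law N _ finite_charged_cells
      AE_quantize_charged_cells[OF m] pos, unfolded prob_value_eq, folded H_def]
  have "1 \<le> card ?G"
    using sum_cell_prob_charged_cells[OF m] finite_charged_cells by (cases "?G = {}") (auto simp: Suc_le_eq card_gt_0_iff)
  then have "0 \<le> (real (card ?G) - 1) / real N" by simp
  moreover have "(real (card ?G) - 1) / real N \<le> (real m ^ CARD('n) - 1) / real N"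
    using card_charged_cells_le by (intro divide_right_mono) (simp_all add: of_nat_le_iff[symmetric] del: of_nat_le_iff)
  ultimately have "ln (1 + (real (card ?G) - 1) / real N) \<le> ln (1 + (real m ^ CARD('n) - 1) / real N)"
    by (subst ln_le_cancel_iff) linarith+
  then show ?thesis using bias discretization_error[OF m, folded H_def] by simp
qed

lemma entropy_estimate_deviation:
  assumes m: "m > 0" and N: "N \<ge> 1" and \<delta>: "0 < \<delta>" "\<delta> < 1" and s: "s > 0"
  shows "measure (PiM {..<N} (\<lambda>_. law)) {xs \<in> space (PiM {..<N} (\<lambda>_. law)).
      \<bar>shannon_entropy (empirical N (\<lambda>u. quantize m (xs u))) - real CARD('n) * ln (real m) - diff_entropy p\<bar>
        \<le> L * real CARD('n) / real m + sqrt (2 / real N * ln (2 / \<delta>)) * ln (real N)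
          + ln (1 + (real m ^ CARD('n) - 1) / real N) + s} > 1 - \<delta>"
proof -
  interpret P: prob_space "PiM {..<N} (\<lambda>_. law)" by (intro prob_space_PiM prob_space_law)
  have "quantize m \<in> borel_measurable law" by simp
  note concentration = shannon_entropy_empirical_concentration[OF prob_space_law N this \<delta> s]
    and measurable = measurable_shannon_entropy_empirical[OF prob_space_law N this]
  have "\<bar>(\<integral>xs. shannon_entropy (empirical N (\<lambda>u. quantize m (xs u))) \<partial>PiM {..<N} (\<lambda>_. law))
      - (real CARD('n) * ln (real m) + diff_entropy p)\<bar>
    \<le> L * real CARD('n) / real m + ln (1 + (real m ^ CARD('n) - 1) / real N)"
    using expectation_entropy_estimate_error[OF m N] by (simp add: diff_diff_eq)
  from P.prob_abs_diff_le_gt[OF measurable this concentration]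
  show ?thesis by (simp add: diff_diff_eq ac_simps)
qed

end

section \<open>The entropy estimator\<close>

lemma cube_density_of_distributed:
  assumes M: "prob_space M" and nonneg: "\<And>v. p v \<ge> 0"
    and x: "distributed M lborel x (\<lambda>v. ennreal (p v))"
    and cube: "measure M {\<omega> \<in> space M. x \<omega> \<in> unit_cube} = 1"
  shows "cube_density p"
proof (rule cube_density.intro)
  have "(\<lambda>v. enn2real (ennreal (p v))) \<in> borel_measurable borel"
    using distributed_borel_measurable[OF x] by simp
  then show "p \<in> borel_measurable borel" using nonneg by simp
  have law: "distr M lborel x = density lborel (\<lambda>v. ennreal (p v))"
    by (rule distributed_distr_eq_density[OF x])
  have x_meas: "x \<in> measurable M lborel" by (rule distributed_measurable[OF x])
  have "prob_space (distr M lborel x)" by (rule prob_space.prob_space_distr[OF M x_meas])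
  then show "prob_space (density lborel (\<lambda>v. ennreal (p v)))" by (simp only: law)
  have "measure (distr M lborel x) unit_cube = measure M (x -` unit_cube \<inter> space M)"
    by (rule measure_distr[OF x_meas]) simp
  also have "x -` unit_cube \<inter> space M = {\<omega> \<in> space M. x \<omega> \<in> unit_cube}" by auto
  finally show "measure (density lborel (\<lambda>v. ennreal (p v))) unit_cube = 1"
    using cube law by simp
qed (fact nonneg)

lemma measure_iid_samples:
  fixes X :: "nat \<Rightarrow> 'a \<Rightarrow> 'b::euclidean_space"
  assumes M: "prob_space M" and N: "N \<ge> 1"
    and X_dist: "\<And>i. i < N \<Longrightarrow> distributed M lborel (X i) f"
    and X_indep: "prob_space.indep_vars M (\<lambda>_. borel) X {..<N}"
    and A: "A \<in> sets (PiM {..<N} (\<lambda>_. density lborel f))"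
  shows "measure M {\<omega> \<in> space M. (\<lambda>i\<in>{..<N}. X i \<omega>) \<in> A} = measure (PiM {..<N} (\<lambda>_. density lborel f)) A"
proof -
  interpret M: prob_space M by (rule M)
  have X_meas: "X i \<in> measurable M borel" if "i < N" for i
    using distributed_measurable[OF X_dist[OF that]] by simp
  have X_law: "distr M borel (X i) = density lborel f" if "i < N" for i
  proof -
    have "distr M borel (X i) = distr M lborel (X i)" by (rule distr_cong) auto
    also have "\<dots> = density lborel f" by (rule distributed_distr_eq_density[OF X_dist[OF that]])
    finally show ?thesis .
  qed
  have "distr M (PiM {..<N} (\<lambda>_. borel)) (\<lambda>\<omega>. \<lambda>i\<in>{..<N}. X i \<omega>) = PiM {..<N} (\<lambda>i. distr M borel (X i))"
    using M.indep_vars_iff_distr_eq_PiM'[of "{..<N}" X "\<lambda>_. borel"] N X_meas X_indep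
    by (simp add: lessThan_empty_iff)
  also have "\<dots> = PiM {..<N} (\<lambda>_. density lborel f)" by (intro PiM_cong) (simp_all add: X_law)
  finally have joint: "distr M (PiM {..<N} (\<lambda>_. borel)) (\<lambda>\<omega>. \<lambda>i\<in>{..<N}. X i \<omega>) = PiM {..<N} (\<lambda>_. density lborel f)" .
  have restrict_meas: "(\<lambda>\<omega>. \<lambda>i\<in>{..<N}. X i \<omega>) \<in> measurable M (PiM {..<N} (\<lambda>_. borel))"
    by (intro measurable_restrict X_meas) simp
  have "A \<in> sets (PiM {..<N} (\<lambda>_. borel))"
    using A by (simp cong: sets_PiM_cong)
  then have "measure (PiM {..<N} (\<lambda>_. density lborel f)) A = measure M ((\<lambda>\<omega>. \<lambda>i\<in>{..<N}. X i \<omega>) -` A \<inter> space M)"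
    unfolding joint[symmetric] by (rule measure_distr[OF restrict_meas])
  then show ?thesis by (simp add: vimage_def Int_def conj_commute)
qed


lemma entropy_estimator_eq:
  fixes xs :: "nat \<Rightarrow> real ^ 'n"
  assumes "N \<ge> 1"
  shows "entropy_estimator M N xs
    = shannon_entropy (empirical N (\<lambda>u. quantize M ((\<lambda>i\<in>{..<N}. xs i) u))) - real CARD('n) * ln (real M)"
proof -
  have "empirical N (\<lambda>u. quantize M (xs u)) = empirical N (\<lambda>u. quantize M ((\<lambda>i\<in>{..<N}. xs i) u))"
    using assms by (intro empirical_cong) auto
  then show ?thesis
    unfolding entropy_estimator_def quantized_empirical_def empirical_def[symmetric] by simp
qed

lemma (in lipschitz_cube_density) prob_entropy_estimator_error:
  fixes X :: "nat \<Rightarrow> 'a \<Rightarrow> real ^ 'n"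
  assumes M: "prob_space M" and N: "N \<ge> 1"
    and X_dist: "\<And>i. i < N \<Longrightarrow> distributed M lborel (X i) (\<lambda>v. ennreal (p v))"
    and X_indep: "prob_space.indep_vars M (\<lambda>_. borel) X {..<N}"
    and m: "m > 0" and \<delta>: "0 < \<delta>" "\<delta> < 1" and s: "s > 0"
  shows "measure M {\<omega> \<in> space M. \<bar>entropy_estimator m N (\<lambda>i. X i \<omega>) - diff_entropy p\<bar>
      \<le> L * real CARD('n) / real m + s + sqrt (2 / real N * ln (2 / \<delta>)) * ln (real N)
        + ln (1 + (real m ^ CARD('n) - 1) / real N)} > 1 - \<delta>"
proof -
  let ?P = "PiM {..<N} (\<lambda>_. law)"
  define A where "A = {xs \<in> space ?P. \<bar>shannon_entropy (empirical N (\<lambda>u. quantize m (xs u)))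
      - real CARD('n) * ln (real m) - diff_entropy p\<bar> \<le> L * real CARD('n) / real m + s
        + sqrt (2 / real N * ln (2 / \<delta>)) * ln (real N) + ln (1 + (real m ^ CARD('n) - 1) / real N)}"
  have [measurable]: "(\<lambda>xs. shannon_entropy (empirical N (\<lambda>u. quantize m (xs u)))) \<in> borel_measurable ?P"
    by (rule measurable_shannon_entropy_empirical[OF prob_space_law N]) simp
  then have "A \<in> sets ?P" unfolding A_def by measurable
  from measure_iid_samples[OF M N X_dist X_indep this] entropy_estimate_deviation[OF m N \<delta> s]
  show ?thesis
    by (simp add: A_def space_PiM entropy_estimator_eq[OF N] ac_simps cong: rev_conj_cong)
qed

lemma alpha_const_bounds: "0 < alpha_const" "alpha_const < 1 / (exp 1)\<^sup>2"
proof -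
  define e where "e = exp (1::real)"
  define r where "r = sqrt (e\<^sup>2 + 4)"
  have e: "e > 0" by (simp add: e_def)
  have "sqrt (e\<^sup>2) < r" unfolding r_def by (intro real_sqrt_less_mono) simp
  then have r: "r > e" using e by simp
  have alpha: "alpha_const = (r - e) / (2 * e)" by (simp add: alpha_const_def r_def e_def)
  show "0 < alpha_const" using r e by (simp add: alpha)
  have "(r - e) * (r + e) = 4" using e by (simp add: r_def algebra_simps power2_eq_square)
  then have "r - e = 4 / (r + e)" using r e by (simp add: field_simps)
  also have "\<dots> < 4 / (2 * e)" using r e by (intro divide_strict_left_mono) auto
  finally have "(r - e) / (2 * e) < 4 / (2 * e) / (2 * e)" using e by (intro divide_strict_right_mono) auto
  also have "4 / (2 * e) / (2 * e) = 1 / e\<^sup>2" using e by (simp add: power2_eq_square field_simps)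
  finally show "alpha_const < 1 / (exp 1)\<^sup>2" by (simp add: alpha e_def)
qed

lemma ln_mult_eta_gt_2:
  assumes K: "K \<ge> 1" and L: "L > 0" and M: "real M \<ge> 1 / (alpha_const * eta K L)"
  shows "M > 0" "ln (real M * eta K L) > 2"
proof -
  have eta: "eta K L > 0" using K L by (simp add: eta_def)
  have alpha: "0 < alpha_const" "alpha_const < 1 / (exp 1)\<^sup>2" by (fact alpha_const_bounds)+
  then show "M > 0" using M mult_pos_pos[OF alpha(1) eta] by (cases M) auto
  have "(exp 1)\<^sup>2 < 1 / alpha_const"
    using alpha by (simp add: field_simps)
  also have "1 / alpha_const \<le> real M * eta K L"
    using M eta alpha by (simp add: field_simps)
  finally have "exp 2 < real M * eta K L" by (simp add: exp_double[symmetric])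
  then show "ln (real M * eta K L) > 2"
    by (metis exp_gt_zero ln_exp ln_less_cancel_iff order.strict_trans)
qed

theorem theorem2:
  fixes M :: "'a measure"
    and p :: "real ^ 'n \<Rightarrow> real"
    and x :: "'a \<Rightarrow> real ^ 'n"
    and X :: "nat \<Rightarrow> 'a \<Rightarrow> real ^ 'n"
    and L :: real and N :: nat and Mq :: nat
  assumes "prob_space M"
    and "L > 0"
    and p_nonneg: "\<And>v. p v \<ge> 0"
    and x_density: "distributed M lborel x (\<lambda>v. ennreal (p v))"
    and x_cube: "measure M {\<omega> \<in> space M. x \<omega> \<in> unit_cube} = 1"
    and p_lip: "\<And>v w. \<bar>p v - p w\<bar> \<le> L * (\<Sum>i\<in>UNIV. \<bar>v $ i - w $ i\<bar>)"
    and "N \<ge> 1"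
    and X_dist: "\<And>i. i < N \<Longrightarrow> distributed M lborel (X i) (\<lambda>v. ennreal (p v))"
    and X_indep: "prob_space.indep_vars M (\<lambda>_. borel) X {..<N}"
    and M_large: "real Mq \<ge> 1 / (alpha_const * eta CARD('n) L)"
  shows "\<forall>\<delta>. 0 < \<delta> \<and> \<delta> < 1 \<longrightarrow>
     measure M {\<omega> \<in> space M.
        \<bar>entropy_estimator Mq N (\<lambda>i. X i \<omega>) - diff_entropy p\<bar>
          \<le> L * real CARD('n) / (2 * real Mq) * ln (real Mq * eta CARD('n) L)
             + sqrt (2 / real N * ln (2 / \<delta>)) * ln (real N)
             + ln (1 + (real Mq ^ CARD('n) - 1) / real N)}
     > 1 - \<delta>"
proof (intro allI impI)
  fix \<delta> :: real assume \<delta>: "0 < \<delta> \<and> \<delta> < 1"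
  interpret lipschitz_cube_density p L
    by (intro lipschitz_cube_density.intro lipschitz_cube_density_axioms.intro p_lip
        cube_density_of_distributed[OF assms(1) p_nonneg x_density x_cube])
  have "CARD('n) \<ge> 1" by (simp add: Suc_le_eq)
  note Mq = ln_mult_eta_gt_2[OF this \<open>L > 0\<close> M_large]
  define s where "s = L * real CARD('n) / (2 * real Mq) * (ln (real Mq * eta CARD('n) L) - 2)"
  have "s > 0" using Mq \<open>L > 0\<close> by (simp add: s_def)
  have "L * real CARD('n) / real Mq + s = L * real CARD('n) / (2 * real Mq) * ln (real Mq * eta CARD('n) L)"
    using Mq(1) by (simp add: s_def field_simps)
  from prob_entropy_estimator_error[OF assms(1) \<open>N \<ge> 1\<close> X_dist X_indep Mq(1) _ _ \<open>s > 0\<close>, unfolded this] \<delta>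
  show "measure M {\<omega> \<in> space M. \<bar>entropy_estimator Mq N (\<lambda>i. X i \<omega>) - diff_entropy p\<bar>
      \<le> L * real CARD('n) / (2 * real Mq) * ln (real Mq * eta CARD('n) L)
        + sqrt (2 / real N * ln (2 / \<delta>)) * ln (real N) + ln (1 + (real Mq ^ CARD('n) - 1) / real N)} > 1 - \<delta>"
    by simp
qed

end
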